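(* The operator $-\mathfrak{L}^{\mathrm{Rob}}:\mathfrak{D}^{\mathrm{Rob}}\to L^2(\mathbb{T}^d)$ is symmetric and nonnegative, i.e. $\langle H,-\mathfrak{L}^{\mathrm{Rob}}G\rangle=\langle-\mathfrak{L}^{\mathrm{Rob}}H,G\rangle$ and $\langle H,-\mathfrak{L}^{\mathrm{Rob}}H\rangle\ge0$ for all $H,G\in\mathfrak{D}^{\mathrm{Rob}}$, where $\langle\cdot,\cdot\rangle$ is the $L^2(\mathbb{T}^d)$ inner product.
   Context: $\mathbb{T}^d=[0,1)^d$ with periodic boundary; $e_1,\dots,e_d$ canonical basis of $\mathbb{R}^d$. $\Lambda\subset\mathbb{T}^d$ is a simply connected closed region with smooth $(d-1)$-dimensional boundary $\partial\Lambda$ and unit exterior normal $\vec\zeta(u)$. $\mathfrak{D}^{\mathrm{Rob}}$ is the set of $H=h_1\mathbf{1}_\Lambda+h_2\mathbf{1}_{\Lambda^\complement}$ with $h_1,h_2\in C^2(\mathbb{T}^d)$ satisfying, for all $u\in\partial\Lambda$, $\langle\nabla h_1(u),\vec\zeta(u)\rangle=\langle\nabla h_2(u),\vec\zeta(u)\rangle=(h_2(u)-h_1(u))\sum_{j=1}^d|\langle\vec\zeta(u),e_j\rangle|$. $\mathfrak{L}^{\mathrm{Rob}}H=\Delta h_1$ on $\Lambda$ and $\Delta h_2$ on $\Lambda^\complement$. *)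

theory Defs
  imports "HOL-Analysis.Analysis"
begin

definition unit_cube :: "'a::euclidean_space set" where
  "unit_cube = {x. \<forall>b\<in>Basis. 0 \<le> x \<bullet> b \<and> x \<bullet> b < 1}"

text \<open>Coordinate-wise fractional part: the quotient map from R^d onto the torus
  (realised as the cube [0,1)^d).\<close>
definition vfrac :: "'a::euclidean_space \<Rightarrow> 'a" where
  "vfrac x = (\<Sum>b\<in>Basis. frac (x \<bullet> b) *\<^sub>R b)"

lemma istopology_torus:
  "istopology (\<lambda>U. U \<subseteq> (unit_cube::'a::euclidean_space set) \<and> open (vfrac -` U))"
  unfolding istopology_def
  by (auto simp: vimage_Int vimage_Union intro!: open_Int open_UN)

text \<open>Quotient topology of R^d / Z^d transported to the cube [0,1)^d.\<close>
definition torus_top :: "'a::euclidean_space topology" where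
  "torus_top = topology (\<lambda>U. U \<subseteq> unit_cube \<and> open (vfrac -` U))"

definition simply_connected_space :: "'a topology \<Rightarrow> bool" where
  "simply_connected_space X \<longleftrightarrow>
     (\<forall>p q. pathin X p \<and> p 1 = p 0 \<and> pathin X q \<and> q 1 = q 0 \<longrightarrow>
        homotopic_with (\<lambda>r. r 1 = r 0) (top_of_set {0..1}) X p q)"

section \<open>Functions on the torus = Z^d-periodic functions on R^d\<close>

definition periodic :: "('a::euclidean_space \<Rightarrow> real) \<Rightarrow> bool" where
  "periodic f \<longleftrightarrow> (\<forall>x. \<forall>b\<in>Basis. f (x + b) = f x)"

fun dd :: "'a::euclidean_space list \<Rightarrow> ('a \<Rightarrow> real) \<Rightarrow> 'a \<Rightarrow> real" where
  "dd [] f = f"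
| "dd (v # vs) f = (\<lambda>x. frechet_derivative (dd vs f) (at x) v)"

definition C2 :: "('a::euclidean_space \<Rightarrow> real) \<Rightarrow> bool" where
  "C2 f \<longleftrightarrow> (\<forall>x. f differentiable (at x)) \<and>
     (\<forall>b\<in>Basis. \<forall>x. dd [b] f differentiable (at x)) \<and>
     (\<forall>b\<in>Basis. \<forall>c\<in>Basis. continuous_on UNIV (dd [b, c] f))"

definition smooth :: "('a::euclidean_space \<Rightarrow> real) \<Rightarrow> bool" where
  "smooth f \<longleftrightarrow> (\<forall>vs. set vs \<subseteq> Basis \<longrightarrow> (\<forall>x. dd vs f differentiable (at x)))"

definition grad :: "('a::euclidean_space \<Rightarrow> real) \<Rightarrow> 'a \<Rightarrow> 'a" where
  "grad f x = (\<Sum>b\<in>Basis. dd [b] f x *\<^sub>R b)"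

definition laplacian :: "('a::euclidean_space \<Rightarrow> real) \<Rightarrow> 'a \<Rightarrow> real" where
  "laplacian f x = (\<Sum>b\<in>Basis. dd [b, b] f x)"

definition defining_function :: "('a::euclidean_space \<Rightarrow> real) \<Rightarrow> 'a set \<Rightarrow> bool" where
  "defining_function \<phi> \<Lambda> \<longleftrightarrow> periodic \<phi> \<and> smooth \<phi> \<and>
     \<Lambda> = {x\<in>unit_cube. \<phi> x \<le> 0} \<and>
     (\<forall>x. \<phi> x = 0 \<longrightarrow> grad \<phi> x \<noteq> 0)"

definition ext_normal :: "('a::euclidean_space \<Rightarrow> real) \<Rightarrow> 'a \<Rightarrow> 'a" where
  "ext_normal \<phi> u = (1 / norm (grad \<phi> u)) *\<^sub>R grad \<phi> u"

text \<open>Pairs (h1,h2) representing H = h1 1_\<Lambda> + h2 1_{\<Lambda>^c} in D^Rob.\<close>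
definition rob_pair :: "'a set \<Rightarrow> ('a \<Rightarrow> 'a) \<Rightarrow> ('a::euclidean_space \<Rightarrow> real) \<Rightarrow> ('a \<Rightarrow> real) \<Rightarrow> bool" where
  "rob_pair \<Lambda> \<zeta> h1 h2 \<longleftrightarrow> periodic h1 \<and> periodic h2 \<and> C2 h1 \<and> C2 h2 \<and>
     (\<forall>u\<in>torus_top frontier_of \<Lambda>.
        grad h1 u \<bullet> \<zeta> u = (h2 u - h1 u) * (\<Sum>j\<in>Basis. \<bar>\<zeta> u \<bullet> j\<bar>) \<and>
        grad h2 u \<bullet> \<zeta> u = (h2 u - h1 u) * (\<Sum>j\<in>Basis. \<bar>\<zeta> u \<bullet> j\<bar>))"

definition glue :: "'a set \<Rightarrow> ('a \<Rightarrow> real) \<Rightarrow> ('a \<Rightarrow> real) \<Rightarrow> 'a \<Rightarrow> real" where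
  "glue \<Lambda> h1 h2 x = (if x \<in> \<Lambda> then h1 x else h2 x)"

definition L_rob :: "'a set \<Rightarrow> ('a::euclidean_space \<Rightarrow> real) \<Rightarrow> ('a \<Rightarrow> real) \<Rightarrow> 'a \<Rightarrow> real" where
  "L_rob \<Lambda> h1 h2 = glue \<Lambda> (laplacian h1) (laplacian h2)"

definition torus_inner :: "('a::euclidean_space \<Rightarrow> real) \<Rightarrow> ('a \<Rightarrow> real) \<Rightarrow> real" where
  "torus_inner F G = (LINT x:unit_cube|lborel. F x * G x)"

end

theory Submission
  imports Defs
begin

text \<open>Let \<open>\<chi>\<^sub>n = cutoff \<phi> n\<close> be a \<open>C\<^sup>1\<close> approximation of the indicator of \<open>\<Lambda> = {\<phi> \<le> 0}\<close>.
  Then \<open>\<langle>H, -L G\<rangle>\<close> is the limit of \<open>\<integral> \<chi>\<^sub>n h\<^sub>1 (-\<Delta>g\<^sub>1) + (1 - \<chi>\<^sub>n) h\<^sub>2 (-\<Delta>g\<^sub>2)\<close>, and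
  integration by parts over a period (no boundary terms, by periodicity) splits this into the bulk
  term \<open>\<integral> \<chi>\<^sub>n \<nabla>h\<^sub>1\<cdot>\<nabla>g\<^sub>1 + (1 - \<chi>\<^sub>n) \<nabla>h\<^sub>2\<cdot>\<nabla>g\<^sub>2\<close>, which is symmetric in \<open>H, G\<close> and
  nonnegative for \<open>G = H\<close>, and the layer term \<open>\<integral> \<kappa>\<^sub>n (h\<^sub>1 \<nabla>\<phi>\<cdot>\<nabla>g\<^sub>1 - h\<^sub>2 \<nabla>\<phi>\<cdot>\<nabla>g\<^sub>2)\<close>,
  where \<open>\<kappa>\<^sub>n \<le> 0\<close> lives on \<open>0 < \<phi> < 1/(n+1)\<close>. On \<open>{\<phi> = 0}\<close> the Robin condition turns the
  flux into \<open>-q (h\<^sub>2 - h\<^sub>1)(g\<^sub>2 - g\<^sub>1)\<close> with \<open>q \<ge> 0\<close>, and since \<open>\<integral> -\<kappa>\<^sub>n\<close> stays bounded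
  the layer term is asymptotically governed by this flux.\<close>

lemma periodic_add_int_scaleR:
  assumes "periodic f" "b \<in> Basis"
  shows "f (x + of_int k *\<^sub>R b) = f x"
proof -
  have nat_case: "f (y + real n *\<^sub>R b) = f y" for y n
  proof (induction n)
    case (Suc n)
    have "f (y + real (Suc n) *\<^sub>R b) = f ((y + real n *\<^sub>R b) + b)"
      by (simp add: algebra_simps)
    also have "\<dots> = f (y + real n *\<^sub>R b)"
      using assms unfolding periodic_def by blast
    finally show ?case using Suc by simp
  qed simp
  show ?thesis
  proof (cases "k \<ge> 0")
    case True
    then have "of_int k = real (nat k)" by simp
    then show ?thesis by (simp only: nat_case)
  next
    case False
    then have k: "of_int k = - real (nat (-k))" by simp
    have "f (x + of_int k *\<^sub>R b) = f ((x + of_int k *\<^sub>R b) + real (nat (-k)) *\<^sub>R b)"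
      by (rule nat_case[symmetric])
    also have "(x + of_int k *\<^sub>R b) + real (nat (-k)) *\<^sub>R b = x"
      unfolding k by (simp add: algebra_simps)
    finally show ?thesis .
  qed
qed

lemma periodic_add_lattice:
  assumes "periodic f" "B \<subseteq> Basis"
  shows "f (x + (\<Sum>b\<in>B. of_int (k b) *\<^sub>R b)) = f x"
proof -
  have "finite B" using assms(2) finite_Basis finite_subset by blast
  then show ?thesis using assms(2)
  proof (induction B arbitrary: x)
    case (insert c B)
    have "f (x + (\<Sum>b\<in>insert c B. of_int (k b) *\<^sub>R b))
        = f ((x + (\<Sum>b\<in>B. of_int (k b) *\<^sub>R b)) + of_int (k c) *\<^sub>R c)"
      using insert by (simp add: algebra_simps)
    also have "\<dots> = f (x + (\<Sum>b\<in>B. of_int (k b) *\<^sub>R b))"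
      using periodic_add_int_scaleR[OF assms(1)] insert by auto
    finally show ?case using insert by auto
  qed simp
qed

lemma vfrac_eq_add_lattice: "vfrac x = x + (\<Sum>b\<in>Basis. of_int (- floor (x \<bullet> b)) *\<^sub>R b)"
proof -
  have "x + (\<Sum>b\<in>Basis. of_int (- floor (x \<bullet> b)) *\<^sub>R b)
      = (\<Sum>b\<in>Basis. (x \<bullet> b) *\<^sub>R b) + (\<Sum>b\<in>Basis. of_int (- floor (x \<bullet> b)) *\<^sub>R b)"
    by (simp add: euclidean_representation)
  also have "\<dots> = (\<Sum>b\<in>Basis. frac (x \<bullet> b) *\<^sub>R b)"
    unfolding sum.distrib[symmetric] frac_def by (simp add: algebra_simps)
  finally show ?thesis unfolding vfrac_def ..
qed

lemma periodic_vfrac: "periodic f \<Longrightarrow> f (vfrac x) = f x"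
  using periodic_add_lattice[of f Basis x "\<lambda>b. - floor (x \<bullet> b)"] vfrac_eq_add_lattice by (metis order_refl)

lemma inner_vfrac_Basis: "b \<in> Basis \<Longrightarrow> vfrac x \<bullet> b = frac (x \<bullet> b)"
  unfolding vfrac_def inner_sum_left by (simp add: inner_Basis if_distrib cong: if_cong)

lemma vfrac_in_unit_cube: "vfrac x \<in> unit_cube"
  unfolding unit_cube_def by (simp add: inner_vfrac_Basis frac_lt_1)

lemma vfrac_unit_cube: "x \<in> unit_cube \<Longrightarrow> vfrac x = x"
  by (rule euclidean_eqI) (simp add: inner_vfrac_Basis frac_eq unit_cube_def)

lemma unit_cube_subset_cbox: "unit_cube \<subseteq> cbox 0 One"
  unfolding unit_cube_def cbox_def by (auto simp: less_imp_le)

lemma openin_torus_top: "openin torus_top U \<longleftrightarrow> U \<subseteq> unit_cube \<and> open (vfrac -` U)"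
  unfolding torus_top_def topology_inverse'[OF istopology_torus] ..

lemma topspace_torus_top: "topspace torus_top = (unit_cube :: 'a::euclidean_space set)"
proof -
  have "vfrac -` (unit_cube :: 'a set) = UNIV" using vfrac_in_unit_cube by blast
  then have "openin torus_top (unit_cube :: 'a set)" by (simp add: openin_torus_top)
  moreover have "topspace torus_top \<subseteq> unit_cube"
    unfolding topspace_def openin_torus_top by blast
  ultimately show ?thesis using openin_subset by blast
qed

lemma frechet_derivative_eq_grad_inner:
  assumes "f differentiable (at x)"
  shows "frechet_derivative f (at x) v = grad f x \<bullet> v"
proof -
  have lin: "linear (frechet_derivative f (at x))"
    using assms frechet_derivative_works has_derivative_linear by blast
  have "frechet_derivative f (at x) v = frechet_derivative f (at x) (\<Sum>b\<in>Basis. (v \<bullet> b) *\<^sub>R b)"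
    by (simp add: euclidean_representation)
  also have "\<dots> = (\<Sum>b\<in>Basis. (v \<bullet> b) * frechet_derivative f (at x) b)"
    using lin by (simp add: linear_sum linear_cmul)
  also have "\<dots> = grad f x \<bullet> v"
    unfolding grad_def inner_sum_left by (simp add: mult.commute inner_commute)
  finally show ?thesis .
qed

lemma inner_grad_Basis: "b \<in> Basis \<Longrightarrow> grad f x \<bullet> b = dd [b] f x"
  unfolding grad_def inner_sum_left by (simp add: inner_Basis if_distrib cong: if_cong)

lemma grad_inner_grad: "grad f x \<bullet> grad g x = (\<Sum>b\<in>Basis. dd [b] f x * dd [b] g x)"
  using euclidean_inner[of "grad f x" "grad g x"] by (simp add: inner_grad_Basis)

lemma smooth_differentiable: "smooth f \<Longrightarrow> f differentiable (at x)"
  unfolding smooth_def by (metis dd.simps(1) empty_set empty_subsetI)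

lemma has_real_derivative_along_line:
  assumes "(f has_derivative D) (at (x + s *\<^sub>R v))"
  shows "((\<lambda>t. f (x + t *\<^sub>R v)) has_real_derivative D v) (at s)"
proof -
  have "((\<lambda>t. x + t *\<^sub>R v) has_derivative (\<lambda>t. t *\<^sub>R v)) (at s)"
    by (auto intro!: derivative_eq_intros)
  from has_derivative_compose[OF this assms]
  have "((\<lambda>t. f (x + t *\<^sub>R v)) has_derivative (\<lambda>t. D (t *\<^sub>R v))) (at s)" by simp
  moreover have "D (t *\<^sub>R v) = t * D v" for t
    using linear_cmul[OF has_derivative_linear[OF assms]] by simp
  ultimately show ?thesis by (simp add: has_field_derivative_def mult.commute[of _ "D v"])
qed

lemma exists_larger_near_noncritical:
  fixes f :: "'a::euclidean_space \<Rightarrow> real"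
  assumes f: "f differentiable (at x)" and "grad f x \<noteq> 0" and "r > 0"
  shows "\<exists>y. dist x y < r \<and> f x < f y"
proof -
  define v where "v = grad f x"
  have nv: "norm v > 0" using assms(2) v_def by simp
  have "(f has_derivative frechet_derivative f (at x)) (at x)"
    using f frechet_derivative_works by blast
  moreover have "frechet_derivative f (at x) v = v \<bullet> v"
    using frechet_derivative_eq_grad_inner[OF f] v_def by simp
  ultimately have "((\<lambda>t. f (x + t *\<^sub>R v)) has_real_derivative v \<bullet> v) (at 0)"
    using has_real_derivative_along_line[of f "frechet_derivative f (at x)" x 0 v] by simp
  moreover have "v \<bullet> v > 0" using nv by simp
  ultimately have "\<exists>d>0. \<forall>h>0. h < d \<longrightarrow> f (x + 0 *\<^sub>R v) < f (x + (0 + h) *\<^sub>R v)"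
    by (rule DERIV_pos_inc_right)
  then obtain d where d: "d > 0" "\<And>h. 0 < h \<Longrightarrow> h < d \<Longrightarrow> f x < f (x + h *\<^sub>R v)"
    by auto
  define h where "h = min (d/2) (r / (2 * norm v))"
  have h: "0 < h" "h < d" using d \<open>r > 0\<close> nv h_def by auto
  have "h \<le> r / (2 * norm v)" by (simp add: h_def)
  then have "norm (h *\<^sub>R v) \<le> r / (2 * norm v) * norm v"
    using mult_right_mono[OF _ norm_ge_zero] h(1) by (metis abs_of_pos norm_scaleR real_norm_def)
  also have "\<dots> < r" using nv \<open>r > 0\<close> by simp
  finally have "dist x (x + h *\<^sub>R v) < r" by (simp add: dist_norm)
  then show ?thesis using d(2)[OF h] by blast
qed

lemma zero_in_frontier_of_defining_function:
  assumes df: "defining_function \<phi> \<Lambda>" and x: "x \<in> unit_cube" and z: "\<phi> x = 0"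
  shows "x \<in> torus_top frontier_of \<Lambda>"
proof -
  have "periodic \<phi>" and sm: "smooth \<phi>" and L: "\<Lambda> = {x\<in>unit_cube. \<phi> x \<le> 0}"
    and "grad \<phi> x \<noteq> 0"
    using df z unfolding defining_function_def by auto
  have "\<Lambda> \<subseteq> topspace torus_top" using L topspace_torus_top by auto
  moreover have "x \<in> \<Lambda>" using L x z by simp
  ultimately have "x \<in> torus_top closure_of \<Lambda>" using closure_of_subset by blast
  moreover have "x \<notin> torus_top interior_of \<Lambda>"
  proof
    assume "x \<in> torus_top interior_of \<Lambda>"
    then obtain T where T: "openin torus_top T" "x \<in> T" "T \<subseteq> \<Lambda>"
      unfolding interior_of_def by blast
    have "open (vfrac -` T)" using T(1) openin_torus_top by blast
    moreover have "x \<in> vfrac -` T" using T(2) vfrac_unit_cube[OF x] by simp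
    ultimately
    obtain r where r: "r > 0" "ball x r \<subseteq> vfrac -` T"
      using open_contains_ball by blast
    obtain y where "dist x y < r" "\<phi> x < \<phi> y"
      using exists_larger_near_noncritical[OF smooth_differentiable[OF sm] \<open>grad \<phi> x \<noteq> 0\<close> r(1)]
      by blast
    then have "vfrac y \<in> \<Lambda>" using r T(3) by (auto simp: dist_commute)
    then have "\<phi> y \<le> 0" using L periodic_vfrac[OF \<open>periodic \<phi>\<close>] by auto
    with \<open>\<phi> x < \<phi> y\<close> z show False by simp
  qed
  ultimately show ?thesis unfolding frontier_of_def by blast
qed

text \<open>Compactness of the closed cube, transported by periodicity.\<close>
lemma periodic_uniformly_positive_near_zeros:
  fixes P F :: "'a::euclidean_space \<Rightarrow> real"
  assumes "periodic P" "periodic F" "continuous_on UNIV P" "continuous_on UNIV F"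
    and pos: "\<And>x. x \<in> unit_cube \<Longrightarrow> P x = 0 \<Longrightarrow> F x > 0"
  shows "\<exists>e>0. \<forall>x. \<bar>P x\<bar> < e \<longrightarrow> F x > e"
proof -
  define G where "G x = max \<bar>P x\<bar> (F x)" for x
  have G_pos: "G x > 0" for x
  proof -
    have "G x = G (vfrac x)" unfolding G_def using assms(1,2) by (simp add: periodic_vfrac)
    moreover have "G (vfrac x) > 0"
      using pos[OF vfrac_in_unit_cube, of x] unfolding G_def by (cases "P (vfrac x) = 0") auto
    ultimately show ?thesis by simp
  qed
  have "continuous_on (cbox 0 One) G"
    unfolding G_def using assms(3,4) by (auto intro!: continuous_intros intro: continuous_on_subset)
  then obtain m where m: "m \<in> cbox 0 One" "\<And>y. y \<in> cbox 0 One \<Longrightarrow> G m \<le> G y"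
    using continuous_attains_inf[of "cbox (0::'a) One" G] by auto
  have "\<bar>P x\<bar> < G m / 2 \<longrightarrow> F x > G m / 2" for x
  proof -
    have "G m \<le> G (vfrac x)" using m(2) vfrac_in_unit_cube unit_cube_subset_cbox by blast
    then show ?thesis unfolding G_def using assms(1,2) G_pos[of m] by (auto simp: periodic_vfrac)
  qed
  then show ?thesis using G_pos[of m] by (intro exI[of _ "G m / 2"]) auto
qed

section \<open>Integration over a period\<close>

definition cube_integral :: "('a::euclidean_space \<Rightarrow> real) \<Rightarrow> real" where
  "cube_integral f = integral\<^sup>L lborel (\<lambda>x. indicator unit_cube x * f x)"

definition half_open_box :: "('a::euclidean_space \<Rightarrow> real) \<Rightarrow> ('a \<Rightarrow> real) \<Rightarrow> 'a set" where
  "half_open_box l u = {y. \<forall>c\<in>Basis. l c \<le> y \<bullet> c \<and> y \<bullet> c < u c}"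

lemma half_open_box_borel: "half_open_box l u \<in> sets borel"
proof -
  have "half_open_box l u = (\<Inter>c\<in>Basis. {y. l c \<le> y \<bullet> c} \<inter> {y. y \<bullet> c < u c})"
    unfolding half_open_box_def by auto
  also have "\<dots> \<in> sets borel"
    by (intro sets.finite_INT sets.Int borel_closed borel_open
        closed_halfspace_component_ge open_halfspace_component_lt) auto
  finally show ?thesis .
qed

lemma mem_half_open_box_Basis:
  "b \<in> Basis \<Longrightarrow> y \<in> half_open_box l u \<longleftrightarrow>
     (l b \<le> y \<bullet> b \<and> y \<bullet> b < u b) \<and> (\<forall>c\<in>Basis. c \<noteq> b \<longrightarrow> l c \<le> y \<bullet> c \<and> y \<bullet> c < u c)"
  unfolding half_open_box_def by auto

lemma half_open_box_subset_cbox: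
  assumes "\<And>c. c \<in> Basis \<Longrightarrow> 0 \<le> l c \<and> u c \<le> 2"
  shows "half_open_box l u \<subseteq> cbox 0 (2 *\<^sub>R One)"
proof
  fix y assume y: "y \<in> half_open_box l u"
  show "y \<in> cbox 0 (2 *\<^sub>R One)" unfolding mem_box
  proof
    fix c :: 'a assume c: "c \<in> Basis"
    then have "l c \<le> y \<bullet> c" "y \<bullet> c < u c" using y unfolding half_open_box_def by auto
    then show "0 \<bullet> c \<le> y \<bullet> c \<and> y \<bullet> c \<le> (2 *\<^sub>R One) \<bullet> c" using assms[OF c] c by simp
  qed
qed

lemma unit_cube_eq_half_open_box: "unit_cube = half_open_box (\<lambda>_. 0) (\<lambda>_. 1)"
  unfolding unit_cube_def half_open_box_def by auto

lemma unit_cube_borel: "unit_cube \<in> sets borel"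
  unfolding unit_cube_eq_half_open_box by (rule half_open_box_borel)

lemma integrable_indicator_mult_continuous:
  fixes f :: "'a::euclidean_space \<Rightarrow> real"
  assumes "continuous_on UNIV f" "S \<in> sets borel" "S \<subseteq> cbox a b"
  shows "integrable lborel (\<lambda>x. indicator S x * f x)"
proof -
  have "integrable lborel (\<lambda>x. indicator (cbox a b) x *\<^sub>R f x)"
    by (rule borel_integrable_compact) (auto intro: continuous_on_subset[OF assms(1)])
  then have "integrable lborel (\<lambda>x. indicator S x *\<^sub>R (indicator (cbox a b) x *\<^sub>R f x))"
    by (rule integrable_mult_indicator[rotated]) (use assms in simp)
  moreover have "(\<lambda>x. indicator S x *\<^sub>R (indicator (cbox a b) x *\<^sub>R f x)) = (\<lambda>x. indicator S x * f x)"
    by (rule ext) (use assms(3) in \<open>auto split: split_indicator\<close>)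
  ultimately show ?thesis by simp
qed

lemma integrable_unit_cube:
  fixes f :: "'a::euclidean_space \<Rightarrow> real"
  shows "continuous_on UNIV f \<Longrightarrow> integrable lborel (\<lambda>x. indicator unit_cube x * f x)"
  using integrable_indicator_mult_continuous unit_cube_borel unit_cube_subset_cbox by blast

lemma lborel_integral_translate:
  fixes f :: "'a::euclidean_space \<Rightarrow> real"
  assumes "f \<in> borel_measurable borel"
  shows "integral\<^sup>L lborel (\<lambda>x. f (x + c)) = integral\<^sup>L lborel f"
proof -
  have m: "(+) c \<in> measurable lborel borel"
    by (simp add: borel_measurable_continuous_onI continuous_on_add continuous_on_const continuous_on_id)
  have "integral\<^sup>L lborel f = integral\<^sup>L (distr lborel borel ((+) c)) f"
    by (simp add: lborel_distr_plus)
  also have "\<dots> = integral\<^sup>L lborel (\<lambda>x. f (c + x))" by (rule integral_distr[OF m assms])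
  finally show ?thesis by (simp add: add.commute)
qed

text \<open>Translating the cube by \<open>t b\<close> moves the slab \<open>A0\<close> to \<open>A1 = A0 + b\<close> and keeps \<open>C\<close>.\<close>
lemma indicator_unit_cube_translate:
  fixes b :: "'a::euclidean_space"
  assumes b: "b \<in> Basis" and t: "0 \<le> t" "t \<le> 1"
  defines "C \<equiv> half_open_box (\<lambda>c. if c = b then t else 0) (\<lambda>_. 1)"
    and "A0 \<equiv> half_open_box (\<lambda>_. 0) (\<lambda>c. if c = b then t else 1)"
    and "A1 \<equiv> half_open_box (\<lambda>c. if c = b then 1 else 0) (\<lambda>c. if c = b then 1 + t else 1)"
  shows "indicator unit_cube y = (indicator C y + indicator A0 y :: real)"
    and "indicator unit_cube (y - t *\<^sub>R b) = (indicator C y + indicator A1 y :: real)"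
    and "y + b \<in> A1 \<longleftrightarrow> y \<in> A0"
proof -
  have other: "(y - t *\<^sub>R b) \<bullet> c = y \<bullet> c" "(y + b) \<bullet> c = y \<bullet> c"
    if "c \<in> Basis" "c \<noteq> b" for y c
    using b that by (simp_all add: inner_diff_left inner_add_left inner_Basis)
  have same: "(y - t *\<^sub>R b) \<bullet> b = y \<bullet> b - t" "(y + b) \<bullet> b = y \<bullet> b + 1" for y
    using b by (simp_all add: inner_diff_left inner_add_left)
  have Q: "y \<in> unit_cube \<longleftrightarrow> (0 \<le> y \<bullet> b \<and> y \<bullet> b < 1) \<and> (\<forall>c\<in>Basis. c \<noteq> b \<longrightarrow> 0 \<le> y \<bullet> c \<and> y \<bullet> c < 1)" for y
    unfolding unit_cube_eq_half_open_box mem_half_open_box_Basis[OF b] by auto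
  have mC: "y \<in> C \<longleftrightarrow> (t \<le> y \<bullet> b \<and> y \<bullet> b < 1) \<and> (\<forall>c\<in>Basis. c \<noteq> b \<longrightarrow> 0 \<le> y \<bullet> c \<and> y \<bullet> c < 1)"
    and mA0: "y \<in> A0 \<longleftrightarrow> (0 \<le> y \<bullet> b \<and> y \<bullet> b < t) \<and> (\<forall>c\<in>Basis. c \<noteq> b \<longrightarrow> 0 \<le> y \<bullet> c \<and> y \<bullet> c < 1)"
    and mA1: "y \<in> A1 \<longleftrightarrow> (1 \<le> y \<bullet> b \<and> y \<bullet> b < 1 + t) \<and> (\<forall>c\<in>Basis. c \<noteq> b \<longrightarrow> 0 \<le> y \<bullet> c \<and> y \<bullet> c < 1)"
    for y unfolding C_def A0_def A1_def mem_half_open_box_Basis[OF b] by auto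
  show "indicator unit_cube y = (indicator C y + indicator A0 y :: real)"
    unfolding indicator_def using Q[of y] mC[of y] mA0[of y] t by auto
  have "y - t *\<^sub>R b \<in> unit_cube \<longleftrightarrow> (t \<le> y \<bullet> b \<and> y \<bullet> b < 1 + t) \<and> (\<forall>c\<in>Basis. c \<noteq> b \<longrightarrow> 0 \<le> y \<bullet> c \<and> y \<bullet> c < 1)"
    unfolding Q same using other by auto
  then show "indicator unit_cube (y - t *\<^sub>R b) = (indicator C y + indicator A1 y :: real)"
    unfolding indicator_def using mC[of y] mA1[of y] t by auto
  show "y + b \<in> A1 \<longleftrightarrow> y \<in> A0"
    unfolding mA1 mA0 same using other by auto
qed

lemma cube_integral_translate:
  fixes f :: "'a::euclidean_space \<Rightarrow> real"
  assumes f: "continuous_on UNIV f" and periodic_b: "\<And>x. f (x + b) = f x" and b: "b \<in> Basis"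
    and t: "0 \<le> t" "t \<le> 1"
  shows "cube_integral (\<lambda>x. f (x + t *\<^sub>R b)) = cube_integral f"
proof -
  define C where "C = half_open_box (\<lambda>c. if c = b then t else 0) (\<lambda>_. 1::real)"
  define A0 where "A0 = half_open_box (\<lambda>_. 0::real) (\<lambda>c. if c = b then t else 1)"
  define A1 where "A1 = half_open_box (\<lambda>c. if c = b then 1 else 0::real) (\<lambda>c. if c = b then 1 + t else 1)"
  note split = indicator_unit_cube_translate[OF b t, folded C_def A0_def A1_def]
  have borel: "C \<in> sets borel" "A0 \<in> sets borel" "A1 \<in> sets borel"
    unfolding C_def A0_def A1_def by (rule half_open_box_borel)+
  have "C \<subseteq> cbox 0 (2 *\<^sub>R One)" "A0 \<subseteq> cbox 0 (2 *\<^sub>R One)" "A1 \<subseteq> cbox 0 (2 *\<^sub>R One)"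
    unfolding C_def A0_def A1_def using t by (auto intro!: half_open_box_subset_cbox)
  then have int: "integrable lborel (\<lambda>x. indicator S x * f x)" if "S \<in> {C, A0, A1}" for S
    using that borel integrable_indicator_mult_continuous[OF f] by blast
  have fm: "f \<in> borel_measurable borel" using f by (rule borel_measurable_continuous_onI)
  have "cube_integral (\<lambda>x. f (x + t *\<^sub>R b))
      = integral\<^sup>L lborel (\<lambda>x. (\<lambda>y. indicator unit_cube (y - t *\<^sub>R b) * f y) (x + t *\<^sub>R b))"
    unfolding cube_integral_def by simp
  also have "\<dots> = integral\<^sup>L lborel (\<lambda>y. indicator unit_cube (y - t *\<^sub>R b) * f y)"
    by (rule lborel_integral_translate) (unfold split(2), use borel fm in measurable)
  also have "\<dots> = integral\<^sup>L lborel (\<lambda>y. indicator C y * f y) + integral\<^sup>L lborel (\<lambda>y. indicator A1 y * f y)"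
    unfolding split(2) distrib_right using int by simp
  also have "integral\<^sup>L lborel (\<lambda>y. indicator A1 y * f y) = integral\<^sup>L lborel (\<lambda>y. indicator A1 (y + b) * f (y + b))"
    by (rule lborel_integral_translate[symmetric]) (use borel fm in measurable)
  also have "\<dots> = integral\<^sup>L lborel (\<lambda>y. indicator A0 y * f y)"
    using split(3) periodic_b by (simp add: indicator_def)
  also have "integral\<^sup>L lborel (\<lambda>y. indicator C y * f y) + \<dots> = cube_integral f"
    unfolding cube_integral_def split(1) distrib_right using int by simp
  finally show ?thesis .
qed

lemma cube_integral_add:
  "continuous_on UNIV f \<Longrightarrow> continuous_on UNIV g \<Longrightarrow>
    cube_integral (\<lambda>x. f x + g x) = cube_integral f + cube_integral g"
  unfolding cube_integral_def by (simp add: distrib_left integrable_unit_cube)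

lemma cube_integral_diff:
  "continuous_on UNIV f \<Longrightarrow> continuous_on UNIV g \<Longrightarrow>
    cube_integral (\<lambda>x. f x - g x) = cube_integral f - cube_integral g"
  unfolding cube_integral_def by (simp add: right_diff_distrib integrable_unit_cube)

lemma cube_integral_minus: "cube_integral (\<lambda>x. - f x) = - cube_integral f"
  unfolding cube_integral_def by simp

lemma cube_integral_cmult: "cube_integral (\<lambda>x. c * f x) = c * cube_integral f"
  unfolding cube_integral_def by (simp add: mult.left_commute)

lemma cube_integral_divide: "cube_integral (\<lambda>x. f x / c) = cube_integral f / c"
  unfolding cube_integral_def by (simp add: times_divide_eq_right)


lemma cube_integral_nonneg: "(\<And>x. 0 \<le> f x) \<Longrightarrow> 0 \<le> cube_integral f"
  unfolding cube_integral_def by (rule Bochner_Integration.integral_nonneg) simp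


lemma cube_integral_sum:
  assumes "finite I" "\<And>i. i \<in> I \<Longrightarrow> continuous_on UNIV (f i)"
  shows "cube_integral (\<lambda>x. \<Sum>i\<in>I. f i x) = (\<Sum>i\<in>I. cube_integral (f i))"
  unfolding cube_integral_def sum_distrib_left
  by (rule Bochner_Integration.integral_sum) (use assms integrable_unit_cube in blast)

lemma cube_integral_mono:
  assumes "continuous_on UNIV f" "continuous_on UNIV g" "\<And>x. f x \<le> g x"
  shows "cube_integral f \<le> cube_integral g"
  unfolding cube_integral_def
  using integrable_unit_cube[OF assms(1)] integrable_unit_cube[OF assms(2)] assms(3)
  by (intro integral_mono) (auto simp: indicator_def)

lemma difference_quotient_bounded:
  fixes f :: "'a::euclidean_space \<Rightarrow> real"
  assumes df: "\<And>x. (f has_derivative Df x) (at x)" and b: "b \<in> Basis"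
    and M: "\<And>y. y \<in> cbox 0 (2 *\<^sub>R One) \<Longrightarrow> \<bar>Df y b\<bar> \<le> M"
    and x: "x \<in> unit_cube" and t: "0 < t" "t \<le> 1"
  shows "\<bar>(f (x + t *\<^sub>R b) - f x) / t\<bar> \<le> M"
proof -
  have "\<exists>z. 0 < z \<and> z < t \<and> f (x + t *\<^sub>R b) - f (x + 0 *\<^sub>R b) = (t - 0) * Df (x + z *\<^sub>R b) b"
    by (rule MVT2[OF t(1)]) (rule has_real_derivative_along_line[OF df])
  then obtain z where z: "0 < z" "z < t" "f (x + t *\<^sub>R b) - f x = t * Df (x + z *\<^sub>R b) b"
    by auto
  have "x + z *\<^sub>R b \<in> cbox 0 (2 *\<^sub>R One)" unfolding mem_box
  proof
    fix c :: 'a assume c: "c \<in> Basis"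
    have "0 \<le> x \<bullet> c" "x \<bullet> c < 1" using x c unfolding unit_cube_def by auto
    moreover have "0 \<le> b \<bullet> c" "b \<bullet> c \<le> 1" using b c by (auto simp: inner_Basis)
    moreover have "z * (b \<bullet> c) \<le> 1" using z t \<open>0 \<le> b \<bullet> c\<close> \<open>b \<bullet> c \<le> 1\<close>
      by (metis dual_order.trans less_eq_real_def mult_le_one)
    moreover have "0 \<le> z * (b \<bullet> c)" using z \<open>0 \<le> b \<bullet> c\<close> by simp
    ultimately show "0 \<bullet> c \<le> (x + z *\<^sub>R b) \<bullet> c \<and> (x + z *\<^sub>R b) \<bullet> c \<le> (2 *\<^sub>R One) \<bullet> c"
      using c by (simp add: inner_add_left)
  qed
  then show ?thesis using M z t by simp
qed

lemma cube_integral_difference_quotient_periodic: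
  fixes f :: "'a::euclidean_space \<Rightarrow> real"
  assumes f: "continuous_on UNIV f" and periodic_b: "\<And>x. f (x + b) = f x" and b: "b \<in> Basis"
    and t: "0 < t" "t \<le> 1"
  shows "cube_integral (\<lambda>x. (f (x + t *\<^sub>R b) - f x) / t) = 0"
proof -
  have shifted: "continuous_on UNIV (\<lambda>x. f (x + t *\<^sub>R b))"
    by (rule continuous_on_compose2[OF f]) (auto intro!: continuous_intros)
  have "cube_integral (\<lambda>x. (f (x + t *\<^sub>R b) - f x) / t)
      = (cube_integral (\<lambda>x. f (x + t *\<^sub>R b)) - cube_integral f) / t"
    unfolding cube_integral_divide cube_integral_diff[OF shifted f] ..
  also have "\<dots> = 0" using cube_integral_translate[OF f periodic_b b less_imp_le[OF t(1)] t(2)] by simp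
  finally show ?thesis .
qed

lemma difference_quotient_LIMSEQ:
  assumes "(f has_derivative D) (at x)"
  shows "(\<lambda>n. (f (x + inverse (real (Suc n)) *\<^sub>R v) - f x) / inverse (real (Suc n))) \<longlonglongrightarrow> D v"
proof -
  have "((\<lambda>s. f (x + s *\<^sub>R v)) has_real_derivative D v) (at 0)"
    using has_real_derivative_along_line[of f D x 0 v] assms by simp
  then have "((\<lambda>s. (f (x + s *\<^sub>R v) - f x) / s) \<longlongrightarrow> D v) (at 0)"
    unfolding has_field_derivative_iff by simp
  moreover have "filterlim (\<lambda>n. inverse (real (Suc n))) (at 0) sequentially"
    unfolding filterlim_at using LIMSEQ_inverse_real_of_nat by auto
  ultimately show ?thesis by (rule filterlim_compose)
qed

text \<open>The difference quotients of \<open>f\<close> in direction \<open>b\<close> have cube integral zero by translation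
  invariance; dominated convergence passes this to the derivative.\<close>
lemma cube_integral_derivative_periodic:
  fixes f :: "'a::euclidean_space \<Rightarrow> real"
  assumes periodic_b: "\<And>x. f (x + b) = f x" and b: "b \<in> Basis"
    and df: "\<And>x. (f has_derivative Df x) (at x)"
    and cont: "continuous_on UNIV (\<lambda>x. Df x b)"
  shows "cube_integral (\<lambda>x. Df x b) = 0"
proof -
  have f: "continuous_on UNIV f"
    using df has_derivative_continuous continuous_at_imp_continuous_on by blast
  define t where "t n = inverse (real (Suc n))" for n
  have t: "0 < t n" "t n \<le> 1" for n unfolding t_def by (auto simp: field_simps)
  define q where "q n x = indicator unit_cube x * ((f (x + t n *\<^sub>R b) - f x) / t n)" for n x
  have "compact ((\<lambda>x. Df x b) ` cbox 0 (2 *\<^sub>R One))"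
    by (rule compact_continuous_image) (use cont continuous_on_subset in auto)
  then obtain M where M: "\<And>y. y \<in> cbox 0 (2 *\<^sub>R One) \<Longrightarrow> \<bar>Df y b\<bar> \<le> M"
    using compact_imp_bounded bounded_iff by (metis image_eqI real_norm_def)
  have "(\<lambda>n. integral\<^sup>L lborel (q n)) \<longlonglongrightarrow> integral\<^sup>L lborel (\<lambda>x. indicator unit_cube x * Df x b)"
  proof (rule integral_dominated_convergence[where w = "\<lambda>x. indicator unit_cube x * M"])
    show "(\<lambda>x. indicator unit_cube x * Df x b) \<in> borel_measurable lborel"
      using borel_measurable_continuous_onI[OF cont] unit_cube_borel by measurable
    show "q n \<in> borel_measurable lborel" for n
      unfolding q_def using borel_measurable_continuous_onI[OF f] unit_cube_borel by measurable
    show "integrable lborel (\<lambda>x. indicator unit_cube x * M)"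
      using integrable_unit_cube[of "\<lambda>x. M"] by simp
    show "AE x in lborel. norm (q n x) \<le> indicator unit_cube x * M" for n
      using difference_quotient_bounded[OF df b M _ t] by (simp add: q_def indicator_def)
    show "AE x in lborel. (\<lambda>n. q n x) \<longlonglongrightarrow> indicator unit_cube x * Df x b"
    proof (rule AE_I2)
      fix x
      show "(\<lambda>n. q n x) \<longlonglongrightarrow> indicator unit_cube x * Df x b"
        unfolding q_def t_def by (rule tendsto_mult_left[OF difference_quotient_LIMSEQ[OF df]])
    qed
  qed
  moreover have "integral\<^sup>L lborel (q n) = 0" for n
    using cube_integral_difference_quotient_periodic[OF f periodic_b b t]
    unfolding q_def cube_integral_def .
  ultimately have "(\<lambda>n. 0) \<longlonglongrightarrow> integral\<^sup>L lborel (\<lambda>x. indicator unit_cube x * Df x b)"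
    by simp
  then show ?thesis unfolding cube_integral_def using LIMSEQ_const_iff by metis
qed

definition C1 :: "('a::euclidean_space \<Rightarrow> real) \<Rightarrow> bool" where
  "C1 u \<longleftrightarrow> (\<forall>x. u differentiable (at x)) \<and> (\<forall>b\<in>Basis. continuous_on UNIV (dd [b] u))"

lemma differentiable_imp_continuous_on_UNIV:
  "(\<forall>x. f differentiable (at x)) \<Longrightarrow> continuous_on UNIV f"
  by (simp add: continuous_at_imp_continuous_on differentiable_imp_continuous_within)

lemma C2D:
  assumes "C2 v"
  shows "v differentiable (at x)" "continuous_on UNIV v"
    "\<And>b. b \<in> Basis \<Longrightarrow> continuous_on UNIV (dd [b] v)"
    "\<And>b. b \<in> Basis \<Longrightarrow> dd [b] v differentiable (at x)"
    "\<And>b c. b \<in> Basis \<Longrightarrow> c \<in> Basis \<Longrightarrow> continuous_on UNIV (dd [b, c] v)"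
  using assms differentiable_imp_continuous_on_UNIV unfolding C2_def by blast+

lemma C2_imp_C1: "C2 v \<Longrightarrow> C1 v"
  using C2D unfolding C1_def by blast

lemma C1_differentiable: "C1 u \<Longrightarrow> u differentiable (at x)"
  unfolding C1_def by blast

lemma C1_continuous: "C1 u \<Longrightarrow> continuous_on UNIV u"
  unfolding C1_def using differentiable_imp_continuous_on_UNIV by blast

lemma smooth_imp_C2: "smooth f \<Longrightarrow> C2 f"
  unfolding C2_def smooth_def
  by (metis differentiable_imp_continuous_on_UNIV dd.simps(1) empty_subsetI empty_set
      insert_subset list.simps(15))

lemma dd_has_derivative: "(f has_derivative D) (at x) \<Longrightarrow> dd [b] f x = D b"
  using frechet_derivative_at by force

lemma dd_mult:
  fixes u w :: "'a::euclidean_space \<Rightarrow> real"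
  assumes "u differentiable (at x)" "w differentiable (at x)"
  shows "dd [b] (\<lambda>y. u y * w y) x = dd [b] u x * w x + u x * dd [b] w x"
  using dd_has_derivative[OF has_derivative_mult[OF assms[unfolded frechet_derivative_works]]]
  by (simp add: algebra_simps)

lemma grad_mult:
  fixes u w :: "'a::euclidean_space \<Rightarrow> real"
  assumes "u differentiable (at x)" "w differentiable (at x)"
  shows "grad (\<lambda>y. u y * w y) x = w x *\<^sub>R grad u x + u x *\<^sub>R grad w x"
  unfolding grad_def dd_mult[OF assms]
  by (simp add: scaleR_add_left scaleR_sum_right sum.distrib algebra_simps)

lemma dd_translate:
  assumes "\<And>y. f (y + c) = f y" and "f differentiable (at (x + c))"
  shows "dd [b] f (x + c) = dd [b] f x"
proof -
  have "((\<lambda>y. y + c) has_derivative (\<lambda>h. h)) (at x)" by (auto intro!: derivative_eq_intros)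
  from has_derivative_compose[OF this assms(2)[unfolded frechet_derivative_works]]
  have "(f has_derivative frechet_derivative f (at (x + c))) (at x)" using assms(1) by simp
  from dd_has_derivative[OF this, of b] show ?thesis by simp
qed

lemma periodic_dd:
  assumes "periodic f" "\<And>x. f differentiable (at x)"
  shows "periodic (dd [b] f)"
  using assms dd_translate unfolding periodic_def by blast

lemma C1_mult:
  assumes u: "C1 u" and w: "C1 w"
  shows "C1 (\<lambda>y. u y * w y)"
proof -
  have "continuous_on UNIV (dd [b] (\<lambda>y. u y * w y))" if b: "b \<in> Basis" for b
  proof -
    have "dd [b] (\<lambda>y. u y * w y) = (\<lambda>x. dd [b] u x * w x + u x * dd [b] w x)"
      using dd_mult C1_differentiable u w by blast
    moreover have "continuous_on UNIV (\<lambda>x. dd [b] u x * w x + u x * dd [b] w x)"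
      using u w b C1_continuous unfolding C1_def by (intro continuous_intros) auto
    ultimately show ?thesis by simp
  qed
  moreover have "(\<lambda>y. u y * w y) differentiable (at x)" for x
    using C1_differentiable[OF u] C1_differentiable[OF w] by simp
  ultimately show ?thesis unfolding C1_def by blast
qed

lemma continuous_on_grad_inner: "C1 f \<Longrightarrow> C1 g \<Longrightarrow> continuous_on UNIV (\<lambda>x. grad f x \<bullet> grad g x)"
  unfolding grad_inner_grad C1_def by (intro continuous_on_sum continuous_on_mult) auto

lemma periodic_grad_inner:
  assumes "periodic f" "periodic g" "\<And>x. f differentiable (at x)" "\<And>x. g differentiable (at x)"
  shows "periodic (\<lambda>x. grad f x \<bullet> grad g x)"
  using periodic_dd[OF assms(1,3)] periodic_dd[OF assms(2,4)]
  unfolding periodic_def grad_inner_grad by simp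

lemma continuous_on_laplacian: "C2 g \<Longrightarrow> continuous_on UNIV (laplacian g)"
  unfolding laplacian_def using C2D(5) by (intro continuous_on_sum) blast

text \<open>Each \<open>\<partial>\<^sub>b (u \<partial>\<^sub>b v)\<close> integrates to zero over a period.\<close>
lemma cube_integral_green:
  assumes u: "C1 u" "periodic u" and v: "C2 v" "periodic v"
  shows "cube_integral (\<lambda>x. u x * laplacian v x) = - cube_integral (\<lambda>x. grad u x \<bullet> grad v x)"
proof -
  have cu: "continuous_on UNIV u" using C1_continuous[OF u(1)] .
  have du: "\<And>x. u differentiable (at x)" and cdu: "\<And>b. b \<in> Basis \<Longrightarrow> continuous_on UNIV (dd [b] u)"
    using u(1) unfolding C1_def by auto
  have cont1: "continuous_on UNIV (\<lambda>x. u x * dd [b, b] v x)" if "b \<in> Basis" for b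
    using cu C2D(5)[OF v(1) that that] by (intro continuous_intros)
  have cont2: "continuous_on UNIV (\<lambda>x. dd [b] u x * dd [b] v x)" if "b \<in> Basis" for b
    using cdu[OF that] C2D(3)[OF v(1) that] by (intro continuous_intros)
  have partial: "cube_integral (\<lambda>x. u x * dd [b, b] v x) + cube_integral (\<lambda>x. dd [b] u x * dd [b] v x) = 0"
    if b: "b \<in> Basis" for b
  proof -
    define Df where "Df x h = u x * frechet_derivative (dd [b] v) (at x) h + frechet_derivative u (at x) h * dd [b] v x" for x h
    have "((\<lambda>x. u x * dd [b] v x) has_derivative Df x) (at x)" for x
      unfolding Df_def using has_derivative_mult du C2D(4)[OF v(1) b] frechet_derivative_works by blast
    moreover have "u (x + b) * dd [b] v (x + b) = u x * dd [b] v x" for x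
      using u(2) v(2) b dd_translate[of v b x b] C2D(1)[OF v(1)] unfolding periodic_def by simp
    moreover have "Df x b = u x * dd [b, b] v x + dd [b] u x * dd [b] v x" for x
      unfolding Df_def by simp
    ultimately have "cube_integral (\<lambda>x. u x * dd [b, b] v x + dd [b] u x * dd [b] v x) = 0"
      using cube_integral_derivative_periodic[of "\<lambda>x. u x * dd [b] v x" b Df] b
        cont1 cont2 by (simp add: continuous_on_add)
    then show ?thesis by (simp only: cube_integral_add[OF cont1[OF b] cont2[OF b]])
  qed
  have "cube_integral (\<lambda>x. u x * laplacian v x) = (\<Sum>b\<in>Basis. cube_integral (\<lambda>x. u x * dd [b, b] v x))"
    unfolding laplacian_def sum_distrib_left by (rule cube_integral_sum[where f = "\<lambda>b x. u x * dd [b, b] v x", OF finite_Basis cont1])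
  also have "\<dots> = - (\<Sum>b\<in>Basis. cube_integral (\<lambda>x. dd [b] u x * dd [b] v x))"
    using partial by (simp add: eq_neg_iff_add_eq_0 sum.distrib[symmetric])
  also have "\<dots> = - cube_integral (\<lambda>x. grad u x \<bullet> grad v x)"
    unfolding grad_inner_grad
    by (subst cube_integral_sum[where f = "\<lambda>b x. dd [b] u x * dd [b] v x", OF finite_Basis cont2]) auto
  finally show ?thesis .
qed

section \<open>A smooth cutoff of the region\<close>

text \<open>A \<open>C\<^sup>1\<close> step from \<open>1\<close> (for \<open>s \<le> 0\<close>) down to \<open>0\<close> (for \<open>s \<ge> 1\<close>); \<open>6s\<^sup>2 - 6s\<close> is
  negative exactly on \<open>(0, 1)\<close>, so \<open>ramp'\<close> is its derivative everywhere.\<close>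
definition ramp :: "real \<Rightarrow> real" where
  "ramp s = (if s \<le> 0 then 1 else if 1 \<le> s then 0 else 1 - 3 * s^2 + 2 * s^3)"

definition ramp' :: "real \<Rightarrow> real" where
  "ramp' s = min 0 (6 * s^2 - 6 * s)"

lemma has_real_derivative_zero_if_quadratic_bound:
  fixes f :: "real \<Rightarrow> real"
  assumes "\<And>y. \<bar>f y - f x\<bar> \<le> C * (y - x)^2"
  shows "(f has_real_derivative 0) (at x)"
proof -
  have "\<bar>f (x + 1) - f x\<bar> \<le> C" using assms[of "x + 1"] by simp
  then have "0 \<le> C" by (meson abs_ge_zero order_trans)
  have bound: "norm ((f y - f x) / (y - x)) \<le> C * \<bar>y - x\<bar>" for y
  proof (cases "y = x")
    case False
    then have "\<bar>f y - f x\<bar> / \<bar>y - x\<bar> \<le> C * (y - x)^2 / \<bar>y - x\<bar>"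
      using assms[of y] by (simp add: divide_right_mono)
    also have "\<dots> = C * \<bar>y - x\<bar>" using False by (simp add: power2_eq_square field_simps abs_mult_self_eq)
    finally show ?thesis by (simp add: abs_divide)
  qed (use \<open>0 \<le> C\<close> in simp)
  have "((\<lambda>y. C * \<bar>y - x\<bar>) \<longlongrightarrow> C * \<bar>x - x\<bar>) (at x)"
    by (intro tendsto_intros)
  then have lim: "((\<lambda>y. C * \<bar>y - x\<bar>) \<longlongrightarrow> 0) (at x)" by simp
  have "eventually (\<lambda>y. norm ((f y - f x) / (y - x)) \<le> C * \<bar>y - x\<bar>) (at x)"
    by (intro always_eventually allI bound)
  from Lim_null_comparison[OF this lim]
  have "((\<lambda>y. (f y - f x) / (y - x)) \<longlongrightarrow> 0) (at x)" .
  then show ?thesis using has_field_derivative_iff by blast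
qed

lemma ramp_quadratic_bound_0: "\<bar>ramp y - ramp 0\<bar> \<le> 3 * (y - 0)^2"
proof -
  consider "y \<le> 0" | "1 \<le> y" | "0 < y" "y < 1" by linarith
  then show ?thesis
  proof cases
    case 2
    then have "1 \<le> y^2" by (simp add: one_le_power)
    moreover have "\<bar>ramp y - ramp 0\<bar> = 1" using 2 by (simp add: ramp_def)
    ultimately show ?thesis by simp
  next
    case 3
    then have "\<bar>- 3 * y^2 + 2 * y^3\<bar> \<le> 3 * y^2" by (simp add: power2_eq_square power3_eq_cube)
    then show ?thesis using 3 by (simp add: ramp_def)
  qed (simp add: ramp_def)
qed

lemma ramp_quadratic_bound_1: "\<bar>ramp y - ramp 1\<bar> \<le> 3 * (y - 1)^2"
proof -
  consider "1 \<le> y" | "y \<le> 0" | "0 < y" "y < 1" by linarith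
  then show ?thesis
  proof cases
    case 2
    then have "1 \<le> (y - 1)^2" by (simp add: one_le_power power2_commute)
    moreover have "\<bar>ramp y - ramp 1\<bar> = 1" using 2 by (simp add: ramp_def)
    ultimately show ?thesis by simp
  next
    case 3
    have "1 - 3 * y^2 + 2 * y^3 = (1 - y)^2 * (1 + 2 * y)"
      by (simp add: power2_eq_square power3_eq_cube algebra_simps)
    moreover have "(1 - y)^2 * (1 + 2 * y) \<le> (1 - y)^2 * 3" using 3 by (intro mult_left_mono) auto
    ultimately show ?thesis using 3 by (simp add: ramp_def power2_commute)
  qed (simp add: ramp_def)
qed

lemma has_real_derivative_ramp: "(ramp has_real_derivative ramp' s) (at s)"
proof -
  consider "s < 0" | "s = 0" | "0 < s" "s < 1" | "s = 1" | "1 < s" by linarith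
  then show ?thesis
  proof cases
    case 1
    then have "ramp' s = 0" unfolding ramp'_def by (simp add: power2_eq_square)
    then have "((\<lambda>_. 1) has_real_derivative ramp' s) (at s)" by simp
    then show ?thesis
      by (rule has_field_derivative_transform_within_open[where S = "{..<0}"]) (use 1 in \<open>auto simp: ramp_def\<close>)
  next
    case 5
    then have "s * 1 \<le> s * s" by (intro mult_left_mono) auto
    then have "ramp' s = 0" unfolding ramp'_def by (simp add: power2_eq_square)
    then have "((\<lambda>_. 0) has_real_derivative ramp' s) (at s)" by simp
    then show ?thesis
      by (rule has_field_derivative_transform_within_open[where S = "{1<..}"]) (use 5 in \<open>auto simp: ramp_def\<close>)
  next
    case 3
    then have "s * s \<le> s * 1" by (intro mult_left_mono) auto
    then have "ramp' s = - 6 * s + 6 * s^2" unfolding ramp'_def by (simp add: power2_eq_square)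
    moreover have "((\<lambda>s. 1 - 3 * s^2 + 2 * s^3) has_real_derivative (- 6 * s + 6 * s^2)) (at s)"
      by (auto intro!: derivative_eq_intros simp: power2_eq_square)
    ultimately have "((\<lambda>s. 1 - 3 * s^2 + 2 * s^3) has_real_derivative ramp' s) (at s)" by simp
    then show ?thesis
      by (rule has_field_derivative_transform_within_open[where S = "{0<..<1}"]) (use 3 in \<open>auto simp: ramp_def\<close>)
  next
    case 2
    then show ?thesis
      using has_real_derivative_zero_if_quadratic_bound[OF ramp_quadratic_bound_0]
      by (simp add: ramp'_def)
  next
    case 4
    then show ?thesis
      using has_real_derivative_zero_if_quadratic_bound[OF ramp_quadratic_bound_1]
      by (simp add: ramp'_def)
  qed
qed

lemma continuous_on_ramp': "continuous_on UNIV ramp'"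
  unfolding ramp'_def by (intro continuous_intros)

lemma ramp'_nonpos: "ramp' s \<le> 0"
  unfolding ramp'_def by simp

lemma ramp'_nonzero_imp: "ramp' s \<noteq> 0 \<Longrightarrow> 0 < s \<and> s < 1"
proof -
  assume "ramp' s \<noteq> 0"
  then have "s * (s - 1) < 0"
    unfolding ramp'_def by (simp add: min_def power2_eq_square algebra_simps split: if_splits)
  then show ?thesis by (auto simp: mult_less_0_iff)
qed

lemma ramp_bounds: "0 \<le> ramp s" "ramp s \<le> 1"
proof -
  have "0 \<le> ramp s \<and> ramp s \<le> 1"
  proof (cases "s \<le> 0 \<or> 1 \<le> s")
    case False
    then have s: "0 < s" "s < 1" by auto
    have "1 - 3 * s^2 + 2 * s^3 = (1 - s)^2 * (1 + 2 * s)"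
      by (simp add: power2_eq_square power3_eq_cube algebra_simps)
    moreover have "0 \<le> (1 - s)^2 * (1 + 2 * s)" using s by simp
    moreover have "1 - 3 * s^2 + 2 * s^3 \<le> 1" using s by (simp add: power2_eq_square power3_eq_cube)
    ultimately show ?thesis using s by (simp add: ramp_def)
  qed (auto simp: ramp_def)
  then show "0 \<le> ramp s" "ramp s \<le> 1" by auto
qed

lemma ramp_eq_1: "s \<le> 0 \<Longrightarrow> ramp s = 1"
  and ramp_eq_0: "1 \<le> s \<Longrightarrow> ramp s = 0"
  by (auto simp: ramp_def)

text \<open>The indicator of \<open>{\<phi> \<le> 0}\<close>, smoothed across the layer \<open>0 < \<phi> < cutoff_width n\<close>;
  \<open>cutoff_slope \<phi> n\<close> is the factor in its gradient (\<open>grad_cutoff\<close>).\<close>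
definition cutoff_width :: "nat \<Rightarrow> real" where
  "cutoff_width n = inverse (real (Suc n))"

definition cutoff :: "('a \<Rightarrow> real) \<Rightarrow> nat \<Rightarrow> 'a \<Rightarrow> real" where
  "cutoff \<phi> n x = ramp (\<phi> x / cutoff_width n)"

definition cutoff_slope :: "('a \<Rightarrow> real) \<Rightarrow> nat \<Rightarrow> 'a \<Rightarrow> real" where
  "cutoff_slope \<phi> n x = ramp' (\<phi> x / cutoff_width n) / cutoff_width n"

lemma cutoff_width_pos: "cutoff_width n > 0"
  unfolding cutoff_width_def by simp

lemma eventually_cutoff_width_less: "e > 0 \<Longrightarrow> eventually (\<lambda>n. cutoff_width n < e) sequentially"
  unfolding cutoff_width_def using order_tendstoD(2)[OF LIMSEQ_inverse_real_of_nat] by blast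

lemma cutoff_bounds: "0 \<le> cutoff \<phi> n x" "cutoff \<phi> n x \<le> 1"
  unfolding cutoff_def using ramp_bounds by auto

lemma periodic_cutoff: "periodic \<phi> \<Longrightarrow> periodic (cutoff \<phi> n)"
  unfolding periodic_def cutoff_def by simp

lemma cutoff_slope_nonpos: "cutoff_slope \<phi> n x \<le> 0"
  unfolding cutoff_slope_def using ramp'_nonpos cutoff_width_pos by (simp add: divide_nonpos_pos)

lemma cutoff_slope_nonzero_imp: "cutoff_slope \<phi> n x \<noteq> 0 \<Longrightarrow> 0 < \<phi> x \<and> \<phi> x < cutoff_width n"
  using ramp'_nonzero_imp[of "\<phi> x / cutoff_width n"] cutoff_width_pos[of n]
  unfolding cutoff_slope_def by (auto simp: field_simps zero_less_divide_iff)

lemma continuous_on_cutoff_slope: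
  "continuous_on UNIV \<phi> \<Longrightarrow> continuous_on UNIV (cutoff_slope \<phi> n)"
  unfolding cutoff_slope_def using cutoff_width_pos[of n]
  by (intro continuous_intros continuous_on_compose2[OF continuous_on_ramp']) auto

lemma
  fixes \<phi> :: "'a::euclidean_space \<Rightarrow> real"
  assumes "C1 \<phi>"
  shows C1_cutoff: "C1 (cutoff \<phi> n)"
    and dd_cutoff: "dd [b] (cutoff \<phi> n) x = cutoff_slope \<phi> n x * dd [b] \<phi> x"
proof -
  have has_derivative: "(cutoff \<phi> n has_derivative
      (\<lambda>h. ramp' (\<phi> x / cutoff_width n) * (frechet_derivative \<phi> (at x) h / cutoff_width n))) (at x)" for x
  proof -
    have "((\<lambda>x. \<phi> x / cutoff_width n) has_derivative (\<lambda>h. frechet_derivative \<phi> (at x) h / cutoff_width n)) (at x)"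
      using has_derivative_divide'[OF C1_differentiable[OF assms, unfolded frechet_derivative_works]
          has_derivative_const] cutoff_width_pos[of n] by simp
    from has_derivative_compose[OF this has_real_derivative_ramp[unfolded has_field_derivative_def]]
    show ?thesis unfolding cutoff_def by simp
  qed
  then show dd: "dd [b] (cutoff \<phi> n) x = cutoff_slope \<phi> n x * dd [b] \<phi> x" for b x
    using dd_has_derivative[OF has_derivative] unfolding cutoff_slope_def by simp
  have "continuous_on UNIV (dd [b] (cutoff \<phi> n))" if "b \<in> Basis" for b
    unfolding dd using that assms C1_continuous[OF assms] unfolding C1_def
    by (intro continuous_intros continuous_on_cutoff_slope) auto
  then show "C1 (cutoff \<phi> n)" unfolding C1_def using has_derivative differentiableI by blast
qed

lemma grad_cutoff:
  assumes "C1 \<phi>"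
  shows "grad (cutoff \<phi> n) x = cutoff_slope \<phi> n x *\<^sub>R grad \<phi> x"
  unfolding grad_def dd_cutoff[OF assms] by (simp add: scaleR_sum_right)

lemma
  assumes "C1 u"
  shows C1_one_minus: "C1 (\<lambda>x. 1 - u x)"
    and grad_one_minus: "grad (\<lambda>x. 1 - u x) x = - grad u x"
proof -
  have has_derivative: "((\<lambda>x. 1 - u x) has_derivative (\<lambda>h. 0 - frechet_derivative u (at x) h)) (at x)" for x
    using has_derivative_diff[OF has_derivative_const C1_differentiable[OF assms, unfolded frechet_derivative_works]] .
  then have dd: "dd [b] (\<lambda>x. 1 - u x) = (\<lambda>x. - dd [b] u x)" for b
    using dd_has_derivative by fastforce
  then show "grad (\<lambda>x. 1 - u x) x = - grad u x"
    unfolding grad_def by (simp add: sum_negf)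
  show "C1 (\<lambda>x. 1 - u x)"
    using assms has_derivative differentiableI unfolding C1_def dd by (auto intro: continuous_on_minus)
qed

lemma cutoff_tendsto_indicator:
  "(\<lambda>n. cutoff \<phi> n x) \<longlonglongrightarrow> (if \<phi> x \<le> 0 then 1 else 0)"
proof (cases "\<phi> x \<le> 0")
  case True
  then have "cutoff \<phi> n x = 1" for n
    unfolding cutoff_def using cutoff_width_pos[of n] by (intro ramp_eq_1) (simp add: divide_nonpos_pos)
  then show ?thesis using True by simp
next
  case False
  have "eventually (\<lambda>n. cutoff_width n < \<phi> x) sequentially"
    using False by (intro eventually_cutoff_width_less) simp
  then have "eventually (\<lambda>n. cutoff \<phi> n x = 0) sequentially"
  proof (rule eventually_mono)
    fix n assume "cutoff_width n < \<phi> x"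
    then have "1 \<le> \<phi> x / cutoff_width n" using cutoff_width_pos[of n] by (simp add: field_simps)
    then show "cutoff \<phi> n x = 0" unfolding cutoff_def by (rule ramp_eq_0)
  qed
  then show ?thesis using False by (simp add: tendsto_eventually)
qed


lemma abs_cutoff_combination_le: "\<bar>cutoff \<phi> n x * a + (1 - cutoff \<phi> n x) * b\<bar> \<le> \<bar>a\<bar> + \<bar>b\<bar>"
proof -
  have "\<bar>cutoff \<phi> n x * a\<bar> \<le> \<bar>a\<bar>" "\<bar>(1 - cutoff \<phi> n x) * b\<bar> \<le> \<bar>b\<bar>"
    using cutoff_bounds[of \<phi> n x] by (simp_all add: abs_mult mult_left_le_one_le)
  then show ?thesis by (meson abs_triangle_ineq add_mono order_trans)
qed

lemma cutoff_combination_tendsto: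
  "(\<lambda>n. cutoff \<phi> n x * a + (1 - cutoff \<phi> n x) * b) \<longlonglongrightarrow> (if \<phi> x \<le> 0 then a else b)"
proof -
  have "(\<lambda>n. cutoff \<phi> n x * a + (1 - cutoff \<phi> n x) * b)
      \<longlonglongrightarrow> (if \<phi> x \<le> 0 then 1 else 0) * a + (1 - (if \<phi> x \<le> 0 then 1 else 0)) * b"
    by (intro tendsto_intros cutoff_tendsto_indicator)
  then show ?thesis by (cases "\<phi> x \<le> 0") simp_all
qed
section \<open>The smoothed form and the boundary layer\<close>

lemma defining_function_borel: "defining_function \<phi> \<Lambda> \<Longrightarrow> \<Lambda> \<in> sets borel"
proof -
  assume df: "defining_function \<phi> \<Lambda>"
  then have "continuous_on UNIV \<phi>"
    using smooth_imp_C2 C2D(2) unfolding defining_function_def by blast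
  then have "closed {x. \<phi> x \<le> 0}" using closed_Collect_le[of \<phi> "\<lambda>_. 0"] by simp
  moreover have "\<Lambda> = unit_cube \<inter> {x. \<phi> x \<le> 0}" using df unfolding defining_function_def by auto
  ultimately show ?thesis by (simp add: sets.Int[OF unit_cube_borel] borel_closed)
qed

lemma defining_function_C1: "defining_function \<phi> \<Lambda> \<Longrightarrow> C1 \<phi>"
  unfolding defining_function_def using smooth_imp_C2 C2_imp_C1 by blast

text \<open>The form \<open>\<langle>H, -L G\<rangle>\<close> with the indicator of \<open>\<Lambda>\<close> replaced by \<open>cutoff \<phi> n\<close>.\<close>
definition smoothed_form ::
    "('a::euclidean_space \<Rightarrow> real) \<Rightarrow> nat \<Rightarrow> ('a \<Rightarrow> real) \<Rightarrow> ('a \<Rightarrow> real) \<Rightarrow> ('a \<Rightarrow> real) \<Rightarrow> ('a \<Rightarrow> real) \<Rightarrow> real"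
  where "smoothed_form \<phi> n h1 h2 g1 g2 = cube_integral (\<lambda>x.
      cutoff \<phi> n x * h1 x * (- laplacian g1 x) + (1 - cutoff \<phi> n x) * h2 x * (- laplacian g2 x))"

definition bulk_density ::
    "('a::euclidean_space \<Rightarrow> real) \<Rightarrow> nat \<Rightarrow> ('a \<Rightarrow> real) \<Rightarrow> ('a \<Rightarrow> real) \<Rightarrow> ('a \<Rightarrow> real) \<Rightarrow> ('a \<Rightarrow> real) \<Rightarrow> 'a \<Rightarrow> real"
  where "bulk_density \<phi> n h1 h2 g1 g2 x =
      cutoff \<phi> n x * (grad h1 x \<bullet> grad g1 x) + (1 - cutoff \<phi> n x) * (grad h2 x \<bullet> grad g2 x)"

definition boundary_flux ::
    "('a::euclidean_space \<Rightarrow> real) \<Rightarrow> ('a \<Rightarrow> real) \<Rightarrow> ('a \<Rightarrow> real) \<Rightarrow> ('a \<Rightarrow> real) \<Rightarrow> ('a \<Rightarrow> real) \<Rightarrow> 'a \<Rightarrow> real"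
  where "boundary_flux \<phi> h1 h2 g1 g2 x = h1 x * (grad \<phi> x \<bullet> grad g1 x) - h2 x * (grad \<phi> x \<bullet> grad g2 x)"

lemma smoothed_form_tendsto:
  assumes df: "defining_function \<phi> \<Lambda>" and "C2 h1" "C2 h2" "C2 g1" "C2 g2"
  shows "(\<lambda>n. smoothed_form \<phi> n h1 h2 g1 g2) \<longlonglongrightarrow> torus_inner (glue \<Lambda> h1 h2) (\<lambda>x. - L_rob \<Lambda> g1 g2 x)"
proof -
  have \<Lambda>: "\<Lambda> = {x\<in>unit_cube. \<phi> x \<le> 0}" using df unfolding defining_function_def by auto
  have cont: "continuous_on UNIV h1" "continuous_on UNIV h2"
      "continuous_on UNIV (laplacian g1)" "continuous_on UNIV (laplacian g2)"
    using assms(2-5) C2D(2) continuous_on_laplacian by blast+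
  then have meas: "h1 \<in> borel_measurable borel" "h2 \<in> borel_measurable borel"
      "laplacian g1 \<in> borel_measurable borel" "laplacian g2 \<in> borel_measurable borel"
    by (auto intro: borel_measurable_continuous_onI)
  define A where "A x = h1 x * (- laplacian g1 x)" for x
  define B where "B x = h2 x * (- laplacian g2 x)" for x
  define s where "s n x = indicator unit_cube x * (cutoff \<phi> n x * A x + (1 - cutoff \<phi> n x) * B x)" for n x
  define f where "f x = indicator unit_cube x * (glue \<Lambda> h1 h2 x * - L_rob \<Lambda> g1 g2 x)" for x
  have "(\<lambda>n. integral\<^sup>L lborel (s n)) \<longlonglongrightarrow> integral\<^sup>L lborel f"
  proof (rule integral_dominated_convergence[where w = "\<lambda>x. indicator unit_cube x * (\<bar>A x\<bar> + \<bar>B x\<bar>)"])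
    show "f \<in> borel_measurable lborel"
      unfolding f_def glue_def L_rob_def using meas defining_function_borel[OF df] unit_cube_borel
      by measurable
    have "cutoff \<phi> n \<in> borel_measurable borel" for n
      using C1_continuous[OF C1_cutoff[OF defining_function_C1[OF df]]]
      by (rule borel_measurable_continuous_onI)
    then show "s n \<in> borel_measurable lborel" for n
      unfolding s_def A_def B_def using meas unit_cube_borel by measurable
    show "integrable lborel (\<lambda>x. indicator unit_cube x * (\<bar>A x\<bar> + \<bar>B x\<bar>))"
      unfolding A_def B_def using cont by (intro integrable_unit_cube continuous_intros)
    show "AE x in lborel. norm (s n x) \<le> indicator unit_cube x * (\<bar>A x\<bar> + \<bar>B x\<bar>)" for n
    proof (rule AE_I2)
      fix x
      show "norm (s n x) \<le> indicator unit_cube x * (\<bar>A x\<bar> + \<bar>B x\<bar>)"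
        using abs_cutoff_combination_le[of \<phi> n x "A x" "B x"] unfolding s_def
        by (cases "x \<in> unit_cube") simp_all
    qed
    show "AE x in lborel. (\<lambda>n. s n x) \<longlonglongrightarrow> f x"
    proof (rule AE_I2)
      fix x
      have "(\<lambda>n. s n x) \<longlonglongrightarrow> indicator unit_cube x * (if \<phi> x \<le> 0 then A x else B x)"
        unfolding s_def by (intro tendsto_mult_left cutoff_combination_tendsto)
      also have "indicator unit_cube x * (if \<phi> x \<le> 0 then A x else B x) = f x"
        unfolding f_def A_def B_def glue_def L_rob_def \<Lambda> by (cases "x \<in> unit_cube") simp_all
      finally show "(\<lambda>n. s n x) \<longlonglongrightarrow> f x" .
    qed
  qed
  moreover have "integral\<^sup>L lborel (s n) = smoothed_form \<phi> n h1 h2 g1 g2" for n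
    unfolding s_def smoothed_form_def cube_integral_def A_def B_def by (simp add: algebra_simps)
  moreover have "integral\<^sup>L lborel f = torus_inner (glue \<Lambda> h1 h2) (\<lambda>x. - L_rob \<Lambda> g1 g2 x)"
    unfolding torus_inner_def set_lebesgue_integral_def f_def by simp
  ultimately show ?thesis by simp
qed

lemma smoothed_form_eq_green:
  fixes \<phi> :: "'a::euclidean_space \<Rightarrow> real"
  assumes \<phi>: "C1 \<phi>" "periodic \<phi>"
    and h: "C2 h1" "C2 h2" "periodic h1" "periodic h2"
    and g: "C2 g1" "C2 g2" "periodic g1" "periodic g2"
  shows "smoothed_form \<phi> n h1 h2 g1 g2 = cube_integral (\<lambda>x.
      bulk_density \<phi> n h1 h2 g1 g2 x + cutoff_slope \<phi> n x * boundary_flux \<phi> h1 h2 g1 g2 x)"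
proof -
  define u1 where "u1 x = cutoff \<phi> n x * h1 x" for x
  define u2 where "u2 x = (1 - cutoff \<phi> n x) * h2 x" for x
  have C1_cut: "C1 (cutoff \<phi> n)" "C1 (\<lambda>x. 1 - cutoff \<phi> n x)"
    using C1_cutoff[OF \<phi>(1)] C1_one_minus by blast+
  have u: "C1 u1" "C1 u2" "periodic u1" "periodic u2"
    unfolding u1_def u2_def using C1_mult C1_cut C2_imp_C1 h periodic_cutoff[OF \<phi>(2)]
    by (auto simp: periodic_def)
  have grad_u1: "grad u1 x = (h1 x * cutoff_slope \<phi> n x) *\<^sub>R grad \<phi> x + cutoff \<phi> n x *\<^sub>R grad h1 x" for x
    unfolding u1_def grad_mult[OF C1_differentiable[OF C1_cut(1)] C2D(1)[OF h(1)]] grad_cutoff[OF \<phi>(1)]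
    by simp
  have grad_u2: "grad u2 x = - (h2 x * cutoff_slope \<phi> n x) *\<^sub>R grad \<phi> x + (1 - cutoff \<phi> n x) *\<^sub>R grad h2 x" for x
    unfolding u2_def grad_mult[OF C1_differentiable[OF C1_cut(2)] C2D(1)[OF h(2)]]
      grad_one_minus[OF C1_cut(1)] grad_cutoff[OF \<phi>(1)]
    by simp
  have "smoothed_form \<phi> n h1 h2 g1 g2 = cube_integral (\<lambda>x. - (u1 x * laplacian g1 x) - u2 x * laplacian g2 x)"
    unfolding smoothed_form_def u1_def u2_def by (simp add: algebra_simps)
  also have "\<dots> = - cube_integral (\<lambda>x. u1 x * laplacian g1 x) - cube_integral (\<lambda>x. u2 x * laplacian g2 x)"
    using u C1_continuous continuous_on_laplacian g
    by (subst cube_integral_diff) (auto intro!: continuous_intros simp: cube_integral_minus)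
  also have "\<dots> = cube_integral (\<lambda>x. grad u1 x \<bullet> grad g1 x) + cube_integral (\<lambda>x. grad u2 x \<bullet> grad g2 x)"
    using cube_integral_green[OF u(1,3) g(1,3)] cube_integral_green[OF u(2,4) g(2,4)] by simp
  also have "\<dots> = cube_integral (\<lambda>x. grad u1 x \<bullet> grad g1 x + grad u2 x \<bullet> grad g2 x)"
    using continuous_on_grad_inner[OF u(1) C2_imp_C1[OF g(1)]] continuous_on_grad_inner[OF u(2) C2_imp_C1[OF g(2)]]
    by (simp add: cube_integral_add)
  also have "\<dots> = cube_integral (\<lambda>x.
      bulk_density \<phi> n h1 h2 g1 g2 x + cutoff_slope \<phi> n x * boundary_flux \<phi> h1 h2 g1 g2 x)"
    unfolding grad_u1 grad_u2 bulk_density_def boundary_flux_def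
    by (simp add: inner_add_left algebra_simps)
  finally show ?thesis .
qed

lemma cube_integral_cutoff_laplacian:
  assumes "C2 \<phi>" "periodic \<phi>"
  shows "cube_integral (\<lambda>x. - cutoff_slope \<phi> n x * (grad \<phi> x \<bullet> grad \<phi> x))
    = cube_integral (\<lambda>x. cutoff \<phi> n x * laplacian \<phi> x)"
  using cube_integral_green[OF C1_cutoff[OF C2_imp_C1] periodic_cutoff assms] assms
  by (simp add: grad_cutoff[OF C2_imp_C1] cube_integral_minus)

lemma cube_integral_cutoff_laplacian_le:
  assumes "C2 \<phi>"
  shows "cube_integral (\<lambda>x. cutoff \<phi> n x * laplacian \<phi> x) \<le> cube_integral (\<lambda>x. \<bar>laplacian \<phi> x\<bar>)"
proof (rule cube_integral_mono)
  show "continuous_on UNIV (\<lambda>x. cutoff \<phi> n x * laplacian \<phi> x)"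
    using continuous_on_laplacian[OF assms] C1_continuous[OF C1_cutoff[OF C2_imp_C1[OF assms]]]
    by (rule continuous_on_mult[rotated])
  show "continuous_on UNIV (\<lambda>x. \<bar>laplacian \<phi> x\<bar>)"
    using continuous_on_rabs[OF continuous_on_laplacian[OF assms]] .
  have "\<bar>cutoff \<phi> n x * laplacian \<phi> x\<bar> \<le> \<bar>laplacian \<phi> x\<bar>" for x
    using cutoff_bounds[of \<phi> n x] by (simp add: abs_mult mult_left_le_one_le)
  then show "cutoff \<phi> n x * laplacian \<phi> x \<le> \<bar>laplacian \<phi> x\<bar>" for x
    by (rule order_trans[OF abs_ge_self])
qed

text \<open>\<open>|\<nabla>\<phi>|\<close> is bounded below on the layer where \<open>cutoff_slope \<phi> n \<noteq> 0\<close>, and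
  \<open>\<integral> -cutoff_slope \<phi> n \<cdot> |\<nabla>\<phi>|\<^sup>2\<close> is bounded by \<open>cube_integral_cutoff_laplacian\<close>.\<close>
lemma cutoff_slope_integral_bounded:
  assumes df: "defining_function \<phi> \<Lambda>"
  shows "\<exists>C\<ge>0. eventually (\<lambda>n. cube_integral (\<lambda>x. - cutoff_slope \<phi> n x) \<le> C) sequentially"
proof -
  have "periodic \<phi>" and C2: "C2 \<phi>" and grad_nonzero: "\<And>x. \<phi> x = 0 \<Longrightarrow> grad \<phi> x \<noteq> 0"
    using df smooth_imp_C2 unfolding defining_function_def by auto
  have C1: "C1 \<phi>" using C2_imp_C1[OF C2] .
  have cont: "continuous_on UNIV \<phi>" "continuous_on UNIV (\<lambda>x. grad \<phi> x \<bullet> grad \<phi> x)"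
    using C2D(2)[OF C2] continuous_on_grad_inner[OF C1 C1] .
  have "periodic (\<lambda>x. grad \<phi> x \<bullet> grad \<phi> x)"
    using periodic_grad_inner \<open>periodic \<phi>\<close> C1_differentiable[OF C1] by blast
  then obtain e where e: "e > 0" "\<And>x. \<bar>\<phi> x\<bar> < e \<Longrightarrow> grad \<phi> x \<bullet> grad \<phi> x > e"
    using periodic_uniformly_positive_near_zeros[OF \<open>periodic \<phi>\<close> _ cont(1,2)] grad_nonzero by force
  define C where "C = cube_integral (\<lambda>x. \<bar>laplacian \<phi> x\<bar>) / e"
  have bound: "cube_integral (\<lambda>x. - cutoff_slope \<phi> n x) \<le> C" if n: "cutoff_width n < e" for n
  proof -
    have ck: "continuous_on UNIV (cutoff_slope \<phi> n)" using continuous_on_cutoff_slope[OF cont(1)] .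
    have "- cutoff_slope \<phi> n x \<le> (- cutoff_slope \<phi> n x * (grad \<phi> x \<bullet> grad \<phi> x)) / e" for x
    proof (cases "cutoff_slope \<phi> n x = 0")
      case False
      then have "\<bar>\<phi> x\<bar> < e" using cutoff_slope_nonzero_imp n by fastforce
      then have "- cutoff_slope \<phi> n x * e \<le> - cutoff_slope \<phi> n x * (grad \<phi> x \<bullet> grad \<phi> x)"
        using e(2) cutoff_slope_nonpos[of \<phi> n x] by (intro mult_left_mono) (auto intro: less_imp_le)
      then show ?thesis using e(1) by (simp add: field_simps)
    qed simp
    then have "cube_integral (\<lambda>x. - cutoff_slope \<phi> n x)
        \<le> cube_integral (\<lambda>x. (- cutoff_slope \<phi> n x * (grad \<phi> x \<bullet> grad \<phi> x)) / e)"
      using ck cont e(1) by (intro cube_integral_mono) (auto intro!: continuous_intros)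
    also have "\<dots> = cube_integral (\<lambda>x. - cutoff_slope \<phi> n x * (grad \<phi> x \<bullet> grad \<phi> x)) / e"
      by (rule cube_integral_divide)
    also have "cube_integral (\<lambda>x. - cutoff_slope \<phi> n x * (grad \<phi> x \<bullet> grad \<phi> x))
        = cube_integral (\<lambda>x. cutoff \<phi> n x * laplacian \<phi> x)"
      using cube_integral_cutoff_laplacian[OF C2 \<open>periodic \<phi>\<close>] .
    also have "cube_integral (\<lambda>x. cutoff \<phi> n x * laplacian \<phi> x) / e \<le> C"
      unfolding C_def
      by (rule divide_right_mono[OF cube_integral_cutoff_laplacian_le[OF C2]]) (use e(1) in simp)
    finally show ?thesis .
  qed
  have "C \<ge> 0" unfolding C_def using e(1) by (simp add: cube_integral_nonneg)
  moreover have "eventually (\<lambda>n. cube_integral (\<lambda>x. - cutoff_slope \<phi> n x) \<le> C) sequentially"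
    using eventually_mono[OF eventually_cutoff_width_less[OF e(1)] bound] .
  ultimately show ?thesis by blast
qed

text \<open>Near \<open>{\<phi> = 0}\<close> the weight \<open>-cutoff_slope \<phi> n \<ge> 0\<close> concentrates on the zero set, where \<open>F \<le> 0\<close>.\<close>
lemma boundary_layer_estimate:
  assumes df: "defining_function \<phi> \<Lambda>" and F: "continuous_on UNIV F" "periodic F"
    and F_nonpos: "\<And>x. x \<in> unit_cube \<Longrightarrow> \<phi> x = 0 \<Longrightarrow> F x \<le> 0" and "\<delta> > 0"
  shows "eventually (\<lambda>n. cube_integral (\<lambda>x. - cutoff_slope \<phi> n x * F x) \<le> \<delta>) sequentially"
proof -
  have "periodic \<phi>" and cont: "continuous_on UNIV \<phi>"
    using df C1_continuous[OF defining_function_C1[OF df]] unfolding defining_function_def by auto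
  obtain C where "C \<ge> 0" and C: "eventually (\<lambda>n. cube_integral (\<lambda>x. - cutoff_slope \<phi> n x) \<le> C) sequentially"
    using cutoff_slope_integral_bounded[OF df] by blast
  define d where "d = \<delta> / (C + 1)"
  have "d > 0" unfolding d_def using \<open>\<delta> > 0\<close> \<open>C \<ge> 0\<close> by simp
  then obtain e where "e > 0" and e: "\<And>x. \<bar>\<phi> x\<bar> < e \<Longrightarrow> d - F x > e"
    using periodic_uniformly_positive_near_zeros[OF \<open>periodic \<phi>\<close> _ cont, of "\<lambda>x. d - F x"] F F_nonpos
    by (force simp: periodic_def intro: continuous_intros)
  have "cube_integral (\<lambda>x. - cutoff_slope \<phi> n x * F x) \<le> \<delta>"
    if n: "cutoff_width n < e" and Cn: "cube_integral (\<lambda>x. - cutoff_slope \<phi> n x) \<le> C" for n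
  proof -
    have ck: "continuous_on UNIV (cutoff_slope \<phi> n)" using continuous_on_cutoff_slope[OF cont] .
    have "- cutoff_slope \<phi> n x * F x \<le> d * - cutoff_slope \<phi> n x" for x
    proof (cases "cutoff_slope \<phi> n x = 0")
      case False
      then have "\<bar>\<phi> x\<bar> < e" using cutoff_slope_nonzero_imp n by fastforce
      then have "F x \<le> d" using e[of x] \<open>e > 0\<close> by simp
      then show ?thesis
        using cutoff_slope_nonpos[of \<phi> n x] mult_left_mono[of "F x" d "- cutoff_slope \<phi> n x"]
        by (simp add: mult.commute)
    qed simp
    then have "cube_integral (\<lambda>x. - cutoff_slope \<phi> n x * F x) \<le> d * cube_integral (\<lambda>x. - cutoff_slope \<phi> n x)"
      unfolding cube_integral_cmult[symmetric] using ck F(1)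
      by (intro cube_integral_mono) (auto intro!: continuous_intros)
    also have "\<dots> \<le> d * C" using Cn \<open>d > 0\<close> by simp
    also have "\<dots> \<le> \<delta>" unfolding d_def using \<open>\<delta> > 0\<close> \<open>C \<ge> 0\<close> by (simp add: field_simps)
    finally show ?thesis .
  qed
  then show ?thesis
    using eventually_conj[OF eventually_cutoff_width_less[OF \<open>e > 0\<close>] C] by (auto elim: eventually_mono)
qed

lemma cutoff_slope_integral_tendsto_0:
  assumes df: "defining_function \<phi> \<Lambda>" and F: "continuous_on UNIV F" "periodic F"
    and F_zero: "\<And>x. x \<in> unit_cube \<Longrightarrow> \<phi> x = 0 \<Longrightarrow> F x = 0"
  shows "(\<lambda>n. cube_integral (\<lambda>x. cutoff_slope \<phi> n x * F x)) \<longlonglongrightarrow> 0"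
proof (rule tendstoI)
  fix \<delta> :: real assume "\<delta> > 0"
  have "eventually (\<lambda>n. cube_integral (\<lambda>x. - cutoff_slope \<phi> n x * F x) \<le> \<delta> / 2) sequentially"
    using boundary_layer_estimate[OF df F, of "\<delta> / 2"] F_zero \<open>\<delta> > 0\<close> by simp
  moreover have "eventually (\<lambda>n. cube_integral (\<lambda>x. - cutoff_slope \<phi> n x * - F x) \<le> \<delta> / 2) sequentially"
    using boundary_layer_estimate[OF df, of "\<lambda>x. - F x" "\<delta> / 2"] F F_zero \<open>\<delta> > 0\<close>
    by (simp add: continuous_on_minus periodic_def)
  ultimately show "eventually (\<lambda>n. dist (cube_integral (\<lambda>x. cutoff_slope \<phi> n x * F x)) 0 < \<delta>) sequentially"
    by eventually_elim (use \<open>\<delta> > 0\<close> in \<open>simp add: cube_integral_minus dist_real_def abs_less_iff\<close>)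
qed

section \<open>The Robin condition\<close>

definition robin_coeff :: "('a::euclidean_space \<Rightarrow> real) \<Rightarrow> 'a \<Rightarrow> real" where
  "robin_coeff \<phi> x = norm (grad \<phi> x) * (\<Sum>j\<in>Basis. \<bar>ext_normal \<phi> x \<bullet> j\<bar>)"

lemma robin_coeff_nonneg: "robin_coeff \<phi> x \<ge> 0"
  unfolding robin_coeff_def by (simp add: sum_nonneg)

lemma rob_pairD:
  assumes "rob_pair \<Lambda> \<zeta> h1 h2"
  shows "periodic h1" "periodic h2" "C2 h1" "C2 h2"
  using assms unfolding rob_pair_def by auto

lemma robin_normal_derivative:
  assumes df: "defining_function \<phi> \<Lambda>" and h: "rob_pair \<Lambda> (ext_normal \<phi>) h1 h2"
    and x: "x \<in> unit_cube" "\<phi> x = 0"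
  shows "grad \<phi> x \<bullet> grad h1 x = robin_coeff \<phi> x * (h2 x - h1 x)"
    and "grad \<phi> x \<bullet> grad h2 x = robin_coeff \<phi> x * (h2 x - h1 x)"
proof -
  have "x \<in> torus_top frontier_of \<Lambda>" using zero_in_frontier_of_defining_function[OF df x] .
  then have robin: "grad h1 x \<bullet> ext_normal \<phi> x = (h2 x - h1 x) * (\<Sum>j\<in>Basis. \<bar>ext_normal \<phi> x \<bullet> j\<bar>)"
      "grad h2 x \<bullet> ext_normal \<phi> x = (h2 x - h1 x) * (\<Sum>j\<in>Basis. \<bar>ext_normal \<phi> x \<bullet> j\<bar>)"
    using h unfolding rob_pair_def by blast+
  have "grad \<phi> x \<noteq> 0" using df x unfolding defining_function_def by blast
  then have normal: "grad \<phi> x \<bullet> grad h x = norm (grad \<phi> x) * (grad h x \<bullet> ext_normal \<phi> x)" for h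
    unfolding ext_normal_def by (simp add: inner_commute)
  show "grad \<phi> x \<bullet> grad h1 x = robin_coeff \<phi> x * (h2 x - h1 x)"
    unfolding normal[of h1] robin(1) robin_coeff_def by (simp add: algebra_simps)
  show "grad \<phi> x \<bullet> grad h2 x = robin_coeff \<phi> x * (h2 x - h1 x)"
    unfolding normal[of h2] robin(2) robin_coeff_def by (simp add: algebra_simps)
qed

lemma boundary_flux_robin:
  assumes df: "defining_function \<phi> \<Lambda>"
    and h: "rob_pair \<Lambda> (ext_normal \<phi>) h1 h2" and g: "rob_pair \<Lambda> (ext_normal \<phi>) g1 g2"
    and x: "x \<in> unit_cube" "\<phi> x = 0"
  shows "boundary_flux \<phi> h1 h2 g1 g2 x = - robin_coeff \<phi> x * (h2 x - h1 x) * (g2 x - g1 x)"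
  unfolding boundary_flux_def robin_normal_derivative[OF df g x] by (simp add: algebra_simps)

lemma
  assumes df: "defining_function \<phi> \<Lambda>"
    and h: "rob_pair \<Lambda> (ext_normal \<phi>) h1 h2" and g: "rob_pair \<Lambda> (ext_normal \<phi>) g1 g2"
  shows continuous_on_boundary_flux: "continuous_on UNIV (boundary_flux \<phi> h1 h2 g1 g2)"
    and periodic_boundary_flux: "periodic (boundary_flux \<phi> h1 h2 g1 g2)"
proof -
  have \<phi>: "C1 \<phi>" "periodic \<phi>" using df defining_function_C1 unfolding defining_function_def by auto
  note h' = rob_pairD[OF h] and g' = rob_pairD[OF g]
  show "continuous_on UNIV (boundary_flux \<phi> h1 h2 g1 g2)"
    unfolding boundary_flux_def using \<phi>(1) h'(3,4) g'(3,4) C2_imp_C1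
    by (intro continuous_intros continuous_on_grad_inner C2D(2)) auto
  have "periodic (\<lambda>x. grad \<phi> x \<bullet> grad g1 x)" "periodic (\<lambda>x. grad \<phi> x \<bullet> grad g2 x)"
    using periodic_grad_inner \<phi> g' C1_differentiable C2D(1) by blast+
  then show "periodic (boundary_flux \<phi> h1 h2 g1 g2)"
    using h'(1,2) unfolding periodic_def boundary_flux_def by simp
qed

lemma continuous_on_bulk_density:
  assumes "C1 \<phi>" "C2 h1" "C2 h2" "C2 g1" "C2 g2"
  shows "continuous_on UNIV (bulk_density \<phi> n h1 h2 g1 g2)"
  unfolding bulk_density_def using assms C2_imp_C1 C1_continuous[OF C1_cutoff[OF assms(1)]]
  by (intro continuous_intros continuous_on_grad_inner) auto

lemma bulk_density_commute: "bulk_density \<phi> n h1 h2 g1 g2 x = bulk_density \<phi> n g1 g2 h1 h2 x"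
  unfolding bulk_density_def by (simp add: inner_commute)

lemma bulk_density_nonneg: "0 \<le> bulk_density \<phi> n h1 h2 h1 h2 x"
  unfolding bulk_density_def using cutoff_bounds[of \<phi> n x] by simp

lemma robin_form_symmetric:
  assumes df: "defining_function \<phi> \<Lambda>"
    and h: "rob_pair \<Lambda> (ext_normal \<phi>) h1 h2" and g: "rob_pair \<Lambda> (ext_normal \<phi>) g1 g2"
  shows "torus_inner (glue \<Lambda> h1 h2) (\<lambda>x. - L_rob \<Lambda> g1 g2 x)
    = torus_inner (\<lambda>x. - L_rob \<Lambda> h1 h2 x) (glue \<Lambda> g1 g2)"
proof -
  have \<phi>: "C1 \<phi>" "periodic \<phi>" using df defining_function_C1 unfolding defining_function_def by auto
  note h' = rob_pairD[OF h] and g' = rob_pairD[OF g]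
  define E where "E x = boundary_flux \<phi> h1 h2 g1 g2 x - boundary_flux \<phi> g1 g2 h1 h2 x" for x
  have E: "continuous_on UNIV E" "periodic E"
    unfolding E_def using continuous_on_boundary_flux[OF df] periodic_boundary_flux[OF df] h g
    by (auto intro: continuous_on_diff simp: periodic_def)
  have "smoothed_form \<phi> n h1 h2 g1 g2 - smoothed_form \<phi> n g1 g2 h1 h2
      = cube_integral (\<lambda>x. cutoff_slope \<phi> n x * E x)" for n
  proof -
    have cont: "continuous_on UNIV (\<lambda>x. bulk_density \<phi> n h1 h2 g1 g2 x + cutoff_slope \<phi> n x * boundary_flux \<phi> h1 h2 g1 g2 x)"
      "continuous_on UNIV (\<lambda>x. bulk_density \<phi> n g1 g2 h1 h2 x + cutoff_slope \<phi> n x * boundary_flux \<phi> g1 g2 h1 h2 x)"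
      using continuous_on_bulk_density \<phi>(1) h'(3,4) g'(3,4) continuous_on_cutoff_slope[OF C1_continuous[OF \<phi>(1)]]
        continuous_on_boundary_flux[OF df] h g by (auto intro!: continuous_intros)
    show ?thesis
      unfolding smoothed_form_eq_green[OF \<phi> h'(3,4,1,2) g'(3,4,1,2)] smoothed_form_eq_green[OF \<phi> g'(3,4,1,2) h'(3,4,1,2)]
        cube_integral_diff[OF cont, symmetric] E_def
      by (simp add: bulk_density_commute[of \<phi> n g1] algebra_simps)
  qed
  moreover have "(\<lambda>n. cube_integral (\<lambda>x. cutoff_slope \<phi> n x * E x)) \<longlonglongrightarrow> 0"
    using cutoff_slope_integral_tendsto_0[OF df E] boundary_flux_robin[OF df h g] boundary_flux_robin[OF df g h]
    unfolding E_def by simp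
  ultimately have "(\<lambda>n. smoothed_form \<phi> n h1 h2 g1 g2 - smoothed_form \<phi> n g1 g2 h1 h2) \<longlonglongrightarrow> 0"
    by simp
  moreover have "(\<lambda>n. smoothed_form \<phi> n h1 h2 g1 g2 - smoothed_form \<phi> n g1 g2 h1 h2) \<longlonglongrightarrow>
      torus_inner (glue \<Lambda> h1 h2) (\<lambda>x. - L_rob \<Lambda> g1 g2 x) - torus_inner (glue \<Lambda> g1 g2) (\<lambda>x. - L_rob \<Lambda> h1 h2 x)"
    using smoothed_form_tendsto[OF df h'(3,4) g'(3,4)] smoothed_form_tendsto[OF df g'(3,4) h'(3,4)]
    by (rule tendsto_diff)
  ultimately have "torus_inner (glue \<Lambda> h1 h2) (\<lambda>x. - L_rob \<Lambda> g1 g2 x) = torus_inner (glue \<Lambda> g1 g2) (\<lambda>x. - L_rob \<Lambda> h1 h2 x)"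
    using LIMSEQ_unique by fastforce
  then show ?thesis unfolding torus_inner_def by (simp add: mult.commute)
qed

lemma smoothed_form_diagonal_ge:
  assumes df: "defining_function \<phi> \<Lambda>" and h: "rob_pair \<Lambda> (ext_normal \<phi>) h1 h2"
  shows "cube_integral (\<lambda>x. cutoff_slope \<phi> n x * boundary_flux \<phi> h1 h2 h1 h2 x)
    \<le> smoothed_form \<phi> n h1 h2 h1 h2"
proof -
  have \<phi>: "C1 \<phi>" "periodic \<phi>" using df defining_function_C1 unfolding defining_function_def by auto
  note h' = rob_pairD[OF h]
  have "continuous_on UNIV (\<lambda>x. cutoff_slope \<phi> n x * boundary_flux \<phi> h1 h2 h1 h2 x)"
    using continuous_on_cutoff_slope[OF C1_continuous[OF \<phi>(1)]] continuous_on_boundary_flux[OF df h h]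
    by (rule continuous_on_mult)
  then have "cube_integral (\<lambda>x. cutoff_slope \<phi> n x * boundary_flux \<phi> h1 h2 h1 h2 x)
      \<le> cube_integral (\<lambda>x. bulk_density \<phi> n h1 h2 h1 h2 x + cutoff_slope \<phi> n x * boundary_flux \<phi> h1 h2 h1 h2 x)"
    using continuous_on_bulk_density[OF \<phi>(1) h'(3,4) h'(3,4)] bulk_density_nonneg
    by (intro cube_integral_mono) (auto intro: continuous_on_add)
  also have "\<dots> = smoothed_form \<phi> n h1 h2 h1 h2"
    unfolding smoothed_form_eq_green[OF \<phi> h'(3,4,1,2) h'(3,4,1,2)] ..
  finally show ?thesis .
qed

lemma robin_form_nonneg:
  assumes df: "defining_function \<phi> \<Lambda>" and h: "rob_pair \<Lambda> (ext_normal \<phi>) h1 h2"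
  shows "torus_inner (glue \<Lambda> h1 h2) (\<lambda>x. - L_rob \<Lambda> h1 h2 x) \<ge> 0"
proof -
  note h' = rob_pairD[OF h]
  define W where "W = boundary_flux \<phi> h1 h2 h1 h2"
  have W: "continuous_on UNIV W" "periodic W"
    unfolding W_def using continuous_on_boundary_flux[OF df h h] periodic_boundary_flux[OF df h h] .
  have W_nonpos: "W x \<le> 0" if "x \<in> unit_cube" "\<phi> x = 0" for x
    unfolding W_def boundary_flux_robin[OF df h h that]
    using mult_nonneg_nonneg[OF robin_coeff_nonneg[of \<phi> x] zero_le_square[of "h2 x - h1 x"]]
    by (simp add: mult.assoc)
  have lim: "(\<lambda>n. smoothed_form \<phi> n h1 h2 h1 h2) \<longlonglongrightarrow> torus_inner (glue \<Lambda> h1 h2) (\<lambda>x. - L_rob \<Lambda> h1 h2 x)"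
    using smoothed_form_tendsto[OF df h'(3,4) h'(3,4)] .
  have lower: "- \<delta> \<le> torus_inner (glue \<Lambda> h1 h2) (\<lambda>x. - L_rob \<Lambda> h1 h2 x)" if "\<delta> > 0" for \<delta>
  proof (rule tendsto_lowerbound[OF lim])
    have "- \<delta> \<le> smoothed_form \<phi> n h1 h2 h1 h2"
      if "cube_integral (\<lambda>x. - cutoff_slope \<phi> n x * W x) \<le> \<delta>" for n
      using that smoothed_form_diagonal_ge[OF df h, of n] cube_integral_minus[of "\<lambda>x. cutoff_slope \<phi> n x * W x"]
      unfolding W_def by simp
    then show "eventually (\<lambda>n. - \<delta> \<le> smoothed_form \<phi> n h1 h2 h1 h2) sequentially"
      using boundary_layer_estimate[OF df W W_nonpos \<open>\<delta> > 0\<close>] by (auto elim: eventually_mono)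
  qed simp
  have "0 \<le> torus_inner (glue \<Lambda> h1 h2) (\<lambda>x. - L_rob \<Lambda> h1 h2 x) + \<delta>" if "\<delta> > 0" for \<delta>
    using lower[OF that] by simp
  then show ?thesis by (rule field_le_epsilon)
qed

theorem proposition7p3:
  fixes \<Lambda> :: "'a::euclidean_space set" and \<phi> :: "'a \<Rightarrow> real"
  assumes "\<Lambda> \<subseteq> unit_cube"
    and "closedin torus_top \<Lambda>"
    and "simply_connected_space (subtopology torus_top \<Lambda>)"
    and "defining_function \<phi> \<Lambda>"
  shows "(\<forall>h1 h2 g1 g2. rob_pair \<Lambda> (ext_normal \<phi>) h1 h2 \<and> rob_pair \<Lambda> (ext_normal \<phi>) g1 g2 \<longrightarrow>
            torus_inner (glue \<Lambda> h1 h2) (\<lambda>x. - L_rob \<Lambda> g1 g2 x)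
              = torus_inner (\<lambda>x. - L_rob \<Lambda> h1 h2 x) (glue \<Lambda> g1 g2))
       \<and> (\<forall>h1 h2. rob_pair \<Lambda> (ext_normal \<phi>) h1 h2 \<longrightarrow>
            torus_inner (glue \<Lambda> h1 h2) (\<lambda>x. - L_rob \<Lambda> h1 h2 x) \<ge> 0)"
  using robin_form_symmetric[OF assms(4)] robin_form_nonneg[OF assms(4)] by simp

end
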